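(* Let $M$ be a smooth $n$-manifold with a torsion-free linear connection $\nabla$ and a symmetric $(0,2)$-tensor field $c$, and let $\widetilde{\nabla}$ be the linear connection on $T^{\ast}M$ given in the adapted frame by $\widetilde{\nabla}_{E_{\overline{i}}}E_{\overline{j}}=0$, $\widetilde{\nabla}_{E_{\overline{i}}}E_{j}=0$, $\widetilde{\nabla}_{E_{i}}E_{\overline{j}}=-\Gamma^{j}_{ih}E_{\overline{h}}$, $\widetilde{\nabla}_{E_{i}}E_{j}=\Gamma^{h}_{ij}E_{h}+\tfrac12(\nabla_i c_{jh}+\nabla_j c_{ih}-\nabla_h c_{ij})E_{\overline{h}}$. Assume that $$\nabla_i(\nabla_kc_{jh}-\nabla_hc_{jk})-\nabla_j(\nabla_kc_{ih}-\nabla_hc_{ik})-R_{ijk}^{\ \ \ m}c_{mh}-R_{ijh}^{\ \ \ m}c_{km}=0$$ for all indices. Then $T^{\ast}M$ is semi-symmetric with respect to $\widetilde\nabla$ if and only if $M$ is semi-symmetric with respect to $\nabla$.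
   Context: Summation convention; $\overline{i}=n+i$. $\Gamma^h_{ij}$ are the coefficients of $\nabla$ in local coordinates $(x^i)$; the curvature of $\nabla$ is $R(X,Y)=\nabla_X\nabla_Y-\nabla_Y\nabla_X-\nabla_{[X,Y]}$ with $R(\partial_i,\partial_j)\partial_k=R_{ijk}^{\ \ \ h}\partial_h$; $\nabla_ic_{jk}$ and $\nabla_i(\nabla_kc_{jh})$ are the components of $\nabla c$ and $\nabla\nabla c$. On $T^{\ast}M$ use induced coordinates $(x^i,p_i)$, $\partial_{\overline i}=\partial/\partial p_i$, and the adapted frame $E_j=\partial_j+p_a\Gamma^a_{hj}\partial_{\overline h}$, $E_{\overline j}=\partial_{\overline j}$. (The connection $\widetilde\nabla$ is the metric connection of the modified Riemannian extension $\overline{g}_{\nabla,c}$ — $\overline{g}_{\nabla,c}(E_i,E_j)=c_{ij}$, $\overline{g}_{\nabla,c}(E_i,E_{\overline j})=\delta_i^j$, $\overline{g}_{\nabla,c}(E_{\overline i},E_{\overline j})=0$ — with torsion $\widetilde T(E_i,E_j)=-p_sR_{ijr}^{\ \ \ s}E_{\overline r}$, other adapted torsion components zero.) For a linear connection $D$ on a manifold $N$ with curvature $K(X,Y)=D_XD_Y-D_YD_X-D_{[X,Y]}$, let $K(X,Y)$ act on tensor fields as a derivation (annihilating functions, commuting with contractions, acting on vector fields as $K(X,Y)$); $N$ is semi-symmetric with respect to $D$ if $(K(X,Y)\cdot K)(Z,W)U=0$ for all vector fields $X,Y,Z,W,U$, where $(K(X,Y)\cdot K)(Z,W)U=K(X,Y)(K(Z,W)U)-K(K(X,Y)Z,W)U-K(Z,K(X,Y)W)U-K(Z,W)K(X,Y)U$.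 *)

theory Defs
  imports "HOL-Analysis.Analysis"
begin

text \<open>Local-coordinate model. A chart domain of the n-manifold M is an open set
  U of real^'n (n = CARD('n)); T*U is U \<times> UNIV with induced coordinates (x,p).\<close>

coinductive cinf_on :: "'a::euclidean_space set \<Rightarrow> ('a \<Rightarrow> 'b::euclidean_space) \<Rightarrow> bool"
  for S where
  "f differentiable_on S \<Longrightarrow> (\<And>v. cinf_on S (\<lambda>x. frechet_derivative f (at x) v)) \<Longrightarrow> cinf_on S f"

definition lie :: "('a::euclidean_space \<Rightarrow> 'a) \<Rightarrow> ('a \<Rightarrow> 'a) \<Rightarrow> 'a \<Rightarrow> 'a" where
  "lie X Y = (\<lambda>q. frechet_derivative Y (at q) (X q) - frechet_derivative X (at q) (Y q))"

definition curv ::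
  "(('a::euclidean_space \<Rightarrow> 'a) \<Rightarrow> ('a \<Rightarrow> 'a) \<Rightarrow> ('a \<Rightarrow> 'a))
     \<Rightarrow> ('a \<Rightarrow> 'a) \<Rightarrow> ('a \<Rightarrow> 'a) \<Rightarrow> ('a \<Rightarrow> 'a) \<Rightarrow> ('a \<Rightarrow> 'a)" where
  "curv D X Y Z = (\<lambda>q. D X (D Y Z) q - D Y (D X Z) q - D (lie X Y) Z q)"

definition curv_dot_curv ::
  "(('a::euclidean_space \<Rightarrow> 'a) \<Rightarrow> ('a \<Rightarrow> 'a) \<Rightarrow> ('a \<Rightarrow> 'a))
     \<Rightarrow> ('a \<Rightarrow> 'a) \<Rightarrow> ('a \<Rightarrow> 'a) \<Rightarrow> ('a \<Rightarrow> 'a) \<Rightarrow> ('a \<Rightarrow> 'a) \<Rightarrow> ('a \<Rightarrow> 'a) \<Rightarrow> ('a \<Rightarrow> 'a)" where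
  "curv_dot_curv D X Y Z W U = (\<lambda>q.
      curv D X Y (curv D Z W U) q - curv D (curv D X Y Z) W U q
    - curv D Z (curv D X Y W) U q - curv D Z W (curv D X Y U) q)"

definition semi_symmetric ::
  "(('a::euclidean_space \<Rightarrow> 'a) \<Rightarrow> ('a \<Rightarrow> 'a) \<Rightarrow> ('a \<Rightarrow> 'a)) \<Rightarrow> 'a set \<Rightarrow> bool" where
  "semi_symmetric D S \<longleftrightarrow>
     (\<forall>X Y Z W U. cinf_on S X \<and> cinf_on S Y \<and> cinf_on S Z \<and> cinf_on S W \<and> cinf_on S U \<longrightarrow>
        (\<forall>q\<in>S. curv_dot_curv D X Y Z W U q = 0))"

text \<open>Base connection with coefficients Gam h i j = Gamma^h_ij, i.e. nabla_{d_i} d_j = Gamma^h_ij d_h.\<close>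
definition base_conn :: "('n::finite \<Rightarrow> 'n \<Rightarrow> 'n \<Rightarrow> real^'n \<Rightarrow> real)
    \<Rightarrow> (real^'n \<Rightarrow> real^'n) \<Rightarrow> (real^'n \<Rightarrow> real^'n) \<Rightarrow> real^'n \<Rightarrow> real^'n" where
  "base_conn Gam X Y = (\<lambda>x. frechet_derivative Y (at x) (X x)
      + (\<chi> h. \<Sum>i\<in>UNIV. \<Sum>j\<in>UNIV. X x $ i * Y x $ j * Gam h i j x))"

definition pd :: "'n::finite \<Rightarrow> (real^'n \<Rightarrow> real) \<Rightarrow> real^'n \<Rightarrow> real" where
  "pd i f x = frechet_derivative f (at x) (axis i 1)"

definition Rc :: "('n::finite \<Rightarrow> 'n \<Rightarrow> 'n \<Rightarrow> real^'n \<Rightarrow> real) \<Rightarrow> 'n \<Rightarrow> 'n \<Rightarrow> 'n \<Rightarrow> 'n \<Rightarrow> real^'n \<Rightarrow> real" where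
  "Rc Gam i j k h x =
     curv (base_conn Gam) (\<lambda>_. axis i 1) (\<lambda>_. axis j 1) (\<lambda>_. axis k 1) x $ h"

definition cov_c :: "('n::finite \<Rightarrow> 'n \<Rightarrow> 'n \<Rightarrow> real^'n \<Rightarrow> real) \<Rightarrow> ('n \<Rightarrow> 'n \<Rightarrow> real^'n \<Rightarrow> real)
    \<Rightarrow> 'n \<Rightarrow> 'n \<Rightarrow> 'n \<Rightarrow> real^'n \<Rightarrow> real" where
  "cov_c Gam c i j k x = pd i (c j k) x
     - (\<Sum>m\<in>UNIV. Gam m i j x * c m k x) - (\<Sum>m\<in>UNIV. Gam m i k x * c j m x)"

definition cov2_c :: "('n::finite \<Rightarrow> 'n \<Rightarrow> 'n \<Rightarrow> real^'n \<Rightarrow> real) \<Rightarrow> ('n \<Rightarrow> 'n \<Rightarrow> real^'n \<Rightarrow> real)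
    \<Rightarrow> 'n \<Rightarrow> 'n \<Rightarrow> 'n \<Rightarrow> 'n \<Rightarrow> real^'n \<Rightarrow> real" where
  "cov2_c Gam c i k j h x = pd i (cov_c Gam c k j h) x
     - (\<Sum>m\<in>UNIV. Gam m i k x * cov_c Gam c m j h x)
     - (\<Sum>m\<in>UNIV. Gam m i j x * cov_c Gam c k m h x)
     - (\<Sum>m\<in>UNIV. Gam m i h x * cov_c Gam c k j m x)"

text \<open>Adapted frame on T*U at q = (x,p): E_j = d_j + p_a Gamma^a_{hj} d_{bar h}, E_{bar j} = d_{bar j}.\<close>
definition Eh :: "('n::finite \<Rightarrow> 'n \<Rightarrow> 'n \<Rightarrow> real^'n \<Rightarrow> real) \<Rightarrow> 'n \<Rightarrow> (real^'n) \<times> (real^'n) \<Rightarrow> (real^'n) \<times> (real^'n)" where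
  "Eh Gam j q = (axis j 1, \<chi> h. \<Sum>a\<in>UNIV. snd q $ a * Gam a h j (fst q))"

definition Ev :: "'n::finite \<Rightarrow> (real^'n) \<times> (real^'n) \<Rightarrow> (real^'n) \<times> (real^'n)" where
  "Ev j q = (0, axis j 1)"

text \<open>Components of a vector field on T*U with respect to the adapted frame.\<close>
definition hcomp :: "((real^'n::finite) \<times> (real^'n) \<Rightarrow> (real^'n) \<times> (real^'n)) \<Rightarrow> 'n \<Rightarrow> (real^'n) \<times> (real^'n) \<Rightarrow> real" where
  "hcomp Y j q = fst (Y q) $ j"

definition vcomp :: "('n::finite \<Rightarrow> 'n \<Rightarrow> 'n \<Rightarrow> real^'n \<Rightarrow> real)
    \<Rightarrow> ((real^'n) \<times> (real^'n) \<Rightarrow> (real^'n) \<times> (real^'n)) \<Rightarrow> 'n \<Rightarrow> (real^'n) \<times> (real^'n) \<Rightarrow> real" where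
  "vcomp Gam Y j q = snd (Y q) $ j
      - (\<Sum>a\<in>UNIV. \<Sum>h\<in>UNIV. snd q $ a * Gam a j h (fst q) * fst (Y q) $ h)"

text \<open>The connection tilde-nabla on T*U, defined from its values on the adapted frame
  (extended by the Leibniz rule and tensoriality in the lower slot):
  tn_{E_bar i} E_bar j = 0, tn_{E_bar i} E_j = 0, tn_{E_i} E_bar j = - Gamma^j_{ih} E_bar h,
  tn_{E_i} E_j = Gamma^h_ij E_h + 1/2 (nabla_i c_jh + nabla_j c_ih - nabla_h c_ij) E_bar h.\<close>
definition cot_conn :: "('n::finite \<Rightarrow> 'n \<Rightarrow> 'n \<Rightarrow> real^'n \<Rightarrow> real) \<Rightarrow> ('n \<Rightarrow> 'n \<Rightarrow> real^'n \<Rightarrow> real)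
    \<Rightarrow> ((real^'n) \<times> (real^'n) \<Rightarrow> (real^'n) \<times> (real^'n)) \<Rightarrow> ((real^'n) \<times> (real^'n) \<Rightarrow> (real^'n) \<times> (real^'n))
    \<Rightarrow> (real^'n) \<times> (real^'n) \<Rightarrow> (real^'n) \<times> (real^'n)" where
  "cot_conn Gam c X Y = (\<lambda>q.
      (\<Sum>j\<in>UNIV. frechet_derivative (hcomp Y j) (at q) (X q) *\<^sub>R Eh Gam j q)
    + (\<Sum>j\<in>UNIV. frechet_derivative (vcomp Gam Y j) (at q) (X q) *\<^sub>R Ev j q)
    + (\<Sum>i\<in>UNIV. \<Sum>j\<in>UNIV. (hcomp X i q * vcomp Gam Y j q) *\<^sub>R
          (\<Sum>h\<in>UNIV. (- Gam j i h (fst q)) *\<^sub>R Ev h q))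
    + (\<Sum>i\<in>UNIV. \<Sum>j\<in>UNIV. (hcomp X i q * hcomp Y j q) *\<^sub>R
          ((\<Sum>h\<in>UNIV. Gam h i j (fst q) *\<^sub>R Eh Gam h q)
         + (\<Sum>h\<in>UNIV. ((cov_c Gam c i j h (fst q) + cov_c Gam c j i h (fst q)
                         - cov_c Gam c h i j (fst q)) / 2) *\<^sub>R Ev h q))))"

end

theory Submission
  imports Defs
begin

text \<open>Work in a chart, so that \<open>T\<^sup>*U = U \<times> \<real>\<^sup>n\<close>, and write \<open>\<nabla>'\<close> for \<open>cot_conn\<close> and \<open>R'\<close> for its
  curvature. Both connections have the form \<open>\<nabla>\<^sub>XY = DY\<cdot>X + \<Gamma>(X, Y)\<close> for a smooth bilinear form
  \<open>\<Gamma>\<close>, so their curvatures are tensors and semi-symmetry is the pointwise identity \<open>R\<cdot>R = 0\<close>.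
  In the adapted frame a tangent vector of \<open>T\<^sup>*U\<close> is a pair \<open>(h, v)\<close> of a horizontal and a
  vertical part. \<open>R'\<close> acts by \<open>R\<close> on \<open>h\<close> and by the dual action \<open>-R\<^sup>T\<close> on \<open>v\<close>, plus a mixed
  term built from \<open>\<nabla>\<nabla>c\<close>; by the Ricci identity for \<open>\<nabla>\<nabla>c\<close> the hypothesis makes the mixed
  term vanish. Then the horizontal part of \<open>R'\<cdot>R'\<close> is \<open>R\<cdot>R\<close> and its vertical part
  pairs with \<open>u\<close> to \<open>-v\<cdot>(R\<cdot>R)u\<close>, so \<open>R'\<cdot>R' = 0\<close> exactly when \<open>R\<cdot>R = 0\<close>.\<close>

section \<open>Smooth functions on open sets\<close>

abbreviation fd :: "('a::real_normed_vector \<Rightarrow> 'b::real_normed_vector) \<Rightarrow> 'a \<Rightarrow> 'a \<Rightarrow> 'b" where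
  "fd f x \<equiv> frechet_derivative f (at x)"

lemma fd_cong_open:
  assumes "open S" "q \<in> S" "\<And>x. x \<in> S \<Longrightarrow> f x = g x"
  shows "fd f q = fd g q"
proof -
  have "\<And>f'. (f has_derivative f') (at q) \<longleftrightarrow> (g has_derivative f') (at q)"
    using has_derivative_transform_within_open[of f _ q UNIV S g]
      has_derivative_transform_within_open[of g _ q UNIV S f] assms by auto
  then show ?thesis unfolding frechet_derivative_def by simp
qed

lemma differentiable_on_cong_open:
  assumes "open S" "f differentiable_on S" "\<And>x. x \<in> S \<Longrightarrow> f x = g x"
  shows "g differentiable_on S"
  using assms unfolding differentiable_on_eq_differentiable_at[OF assms(1)] differentiable_def
  by (meson has_derivative_transform_within_open)

lemma cinf_on_differentiable: "cinf_on S f \<Longrightarrow> f differentiable_on S"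
  by (erule cinf_on.cases) simp

lemma cinf_on_fd: "cinf_on S f \<Longrightarrow> cinf_on S (\<lambda>x. fd f x v)"
  by (erule cinf_on.cases) simp

lemma cinf_on_has_derivative:
  assumes "open S" "cinf_on S f" "x \<in> S"
  shows "(f has_derivative fd f x) (at x)"
  using cinf_on_differentiable[OF assms(2)] assms differentiable_on_eq_differentiable_at frechet_derivative_works
  by blast

lemma cinf_on_coinduct:
  assumes S: "open S" and "P f"
    and diff: "\<And>g. P g \<Longrightarrow> g differentiable_on S"
    and deriv: "\<And>g v. P g \<Longrightarrow> \<exists>g'. (P g' \<or> cinf_on S g') \<and> (\<forall>x\<in>S. fd g x v = g' x)"
  shows "cinf_on S f"
proof -
  let ?X = "\<lambda>h. \<exists>g. (P g \<or> cinf_on S g) \<and> (\<forall>x\<in>S. h x = g x)"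
  have "?X f" using assms by blast
  then show ?thesis
  proof (rule cinf_on.coinduct[of ?X])
    fix h assume "?X h"
    then obtain g where g: "P g \<or> cinf_on S g" and hg: "\<forall>x\<in>S. h x = g x" by blast
    have "g differentiable_on S" using g diff cinf_on_differentiable by blast
    then have "h differentiable_on S" using differentiable_on_cong_open[OF S] hg by metis
    moreover have "?X (\<lambda>x. fd h x v)" for v
    proof -
      have "\<exists>g'. (P g' \<or> cinf_on S g') \<and> (\<forall>x\<in>S. fd g x v = g' x)"
        using g
      proof
        assume "cinf_on S g"
        then show ?thesis by (intro exI[of _ "\<lambda>x. fd g x v"]) (simp add: cinf_on_fd)
      qed (rule deriv)
      moreover have "\<forall>x\<in>S. fd h x v = fd g x v" using fd_cong_open[OF S] hg by metis
      ultimately show ?thesis by auto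
    qed
    ultimately show "\<exists>f. h = f \<and> f differentiable_on S \<and> (\<forall>v. ?X (\<lambda>x. fd f x v) \<or> cinf_on S (\<lambda>x. fd f x v))"
      by blast
  qed
qed

lemma cinf_on_cong:
  assumes S: "open S" and f: "cinf_on S f" and eq: "\<And>x. x \<in> S \<Longrightarrow> f x = g x"
  shows "cinf_on S g"
proof (rule cinf_on_coinduct[OF S, where P = "\<lambda>h. h = g"])
  show "h differentiable_on S" if "h = g" for h
    using differentiable_on_cong_open[OF S cinf_on_differentiable[OF f] eq] that by simp
  show "\<exists>g'. (g' = g \<or> cinf_on S g') \<and> (\<forall>x\<in>S. fd h x v = g' x)" if "h = g" for h v
    using that by (intro exI[of _ "\<lambda>x. fd f x v"]) (simp add: cinf_on_fd[OF f] fd_cong_open[OF S _ eq])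
qed simp

lemma cinf_on_const: "open S \<Longrightarrow> cinf_on S (\<lambda>x. c)"
  by (rule cinf_on_coinduct[where P = "\<lambda>h. \<exists>c. h = (\<lambda>x. c)"]) (auto intro!: exI[of _ "\<lambda>x. 0"])

text \<open>The product rule leaves the class of smooth functions only up to sums, so the coinduction
  for products runs over finite sums of products.\<close>

inductive sum_of_scaleR :: "'a::euclidean_space set \<Rightarrow> ('a \<Rightarrow> 'b::euclidean_space) \<Rightarrow> bool" for S where
  scaleR_term: "cinf_on S f \<Longrightarrow> cinf_on S g \<Longrightarrow> sum_of_scaleR S (\<lambda>x. (f x::real) *\<^sub>R g x)"
| add_term: "sum_of_scaleR S a \<Longrightarrow> sum_of_scaleR S b \<Longrightarrow> sum_of_scaleR S (\<lambda>x. a x + b x)"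

lemma sum_of_scaleR_differentiable: "sum_of_scaleR S h \<Longrightarrow> h differentiable_on S"
  by (induction rule: sum_of_scaleR.induct)
    (auto intro: differentiable_on_scaleR differentiable_on_add cinf_on_differentiable)

lemma sum_of_scaleR_fd:
  assumes S: "open S" and "sum_of_scaleR S h"
  shows "\<exists>g'. sum_of_scaleR S g' \<and> (\<forall>x\<in>S. fd h x v = g' x)"
  using assms(2)
proof induction
  case (scaleR_term f g)
  have "fd (\<lambda>x. f x *\<^sub>R g x) x v = f x *\<^sub>R fd g x v + fd f x v *\<^sub>R g x" if x: "x \<in> S" for x
    using frechet_derivative_at[OF has_derivative_scaleR[OF cinf_on_has_derivative[OF S scaleR_term(1) x]
          cinf_on_has_derivative[OF S scaleR_term(2) x]], symmetric] by simp
  moreover have "sum_of_scaleR S (\<lambda>x. f x *\<^sub>R fd g x v + fd f x v *\<^sub>R g x)"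
    by (intro sum_of_scaleR.intros cinf_on_fd scaleR_term)
  ultimately show ?case by blast
next
  case (add_term a b)
  obtain a' where a': "sum_of_scaleR S a'" "\<forall>x\<in>S. fd a x v = a' x" using add_term by blast
  obtain b' where b': "sum_of_scaleR S b'" "\<forall>x\<in>S. fd b x v = b' x" using add_term by blast
  have "fd (\<lambda>x. a x + b x) x v = a' x + b' x" if x: "x \<in> S" for x
  proof -
    have "(a has_derivative fd a x) (at x)" "(b has_derivative fd b x) (at x)"
      using sum_of_scaleR_differentiable[OF add_term(1)] sum_of_scaleR_differentiable[OF add_term(2)] x
      by (simp_all add: differentiable_on_eq_differentiable_at[OF S] frechet_derivative_works)
    then have "fd (\<lambda>x. a x + b x) x = (\<lambda>v. fd a x v + fd b x v)"
      by (rule frechet_derivative_at[OF has_derivative_add, symmetric])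
    then show ?thesis using a'(2) b'(2) x by simp
  qed
  then show ?case using sum_of_scaleR.add_term[OF a'(1) b'(1)] by blast
qed

lemma sum_of_scaleR_cinf_on:
  assumes S: "open S" and "sum_of_scaleR S h"
  shows "cinf_on S h"
  using assms(2)
  by (rule cinf_on_coinduct[OF S]) (use sum_of_scaleR_differentiable sum_of_scaleR_fd[OF S] in blast)+

lemma cinf_on_scaleR:
  assumes S: "open S" and f: "cinf_on S (f::_\<Rightarrow>real)" and g: "cinf_on S g"
  shows "cinf_on S (\<lambda>x. f x *\<^sub>R g x)"
  by (rule sum_of_scaleR_cinf_on[OF S]) (rule scaleR_term[OF f g])

lemma cinf_on_mult:
  assumes S: "open S" and f: "cinf_on S (f::_\<Rightarrow>real)" and g: "cinf_on S g"
  shows "cinf_on S (\<lambda>x. f x * g x)"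
  using cinf_on_scaleR[OF S f g] by simp

lemma cinf_on_add:
  assumes S: "open S" and f: "cinf_on S f" and g: "cinf_on S g"
  shows "cinf_on S (\<lambda>x. f x + g x)"
proof -
  have one: "cinf_on S (\<lambda>x. 1::real)" by (rule cinf_on_const[OF S])
  have "sum_of_scaleR S (\<lambda>x. 1 *\<^sub>R f x + 1 *\<^sub>R g x)" by (intro add_term scaleR_term one f g)
  then show ?thesis using sum_of_scaleR_cinf_on[OF S] by simp
qed

lemma cinf_on_linear_comp:
  fixes L :: "'b::euclidean_space \<Rightarrow> 'c::euclidean_space" and f :: "'a::euclidean_space \<Rightarrow> 'b"
  assumes S: "open S" and f: "cinf_on S f" and L: "linear L"
  shows "cinf_on S (\<lambda>x. L (f x))"
proof (rule cinf_on_coinduct[OF S, where P = "\<lambda>h. \<exists>f. cinf_on S f \<and> h = (\<lambda>x. L (f x))"])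
  have L': "((\<lambda>x. L (f x)) has_derivative (\<lambda>v. L (fd f x v))) (at x)" if "cinf_on S f" "x \<in> S" for f x
    using bounded_linear.has_derivative[OF linear_conv_bounded_linear[THEN iffD1, OF L]]
      cinf_on_has_derivative[OF S that] .
  show "h differentiable_on S" if "\<exists>f. cinf_on S f \<and> h = (\<lambda>x. L (f x))" for h :: "'a \<Rightarrow> 'c"
    using that L' differentiable_on_eq_differentiable_at[OF S] differentiable_def by blast
  show "\<exists>g'. ((\<exists>f. cinf_on S f \<and> g' = (\<lambda>x. L (f x))) \<or> cinf_on S g') \<and> (\<forall>x\<in>S. fd h x v = g' x)"
    if "\<exists>f. cinf_on S f \<and> h = (\<lambda>x. L (f x))" for h :: "'a \<Rightarrow> 'c" and v
  proof -
    from that obtain f where f: "cinf_on S f" and h: "h = (\<lambda>x. L (f x))" by blast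
    have "\<forall>x\<in>S. fd h x v = L (fd f x v)" unfolding h using frechet_derivative_at[OF L'[OF f], symmetric] by simp
    then show ?thesis by (intro exI[of _ "\<lambda>x. L (fd f x v)"]) (use cinf_on_fd[OF f] in blast)
  qed
qed (use f in blast)

lemma cinf_on_comp_linear:
  fixes L :: "'a::euclidean_space \<Rightarrow> 'b::euclidean_space" and g :: "'b \<Rightarrow> 'c::euclidean_space"
  assumes S: "open S" and T: "open T" and g: "cinf_on S g" and L: "linear L"
    and LT: "\<And>x. x \<in> T \<Longrightarrow> L x \<in> S"
  shows "cinf_on T (\<lambda>x. g (L x))"
proof (rule cinf_on_coinduct[OF T, where P = "\<lambda>h. \<exists>g. cinf_on S g \<and> h = (\<lambda>x. g (L x))"])
  have L': "((\<lambda>x. g (L x)) has_derivative (\<lambda>v. fd g (L x) (L v))) (at x)" if "cinf_on S g" "x \<in> T" for g x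
    using diff_chain_at[OF bounded_linear.has_derivative[OF linear_conv_bounded_linear[THEN iffD1, OF L]
          has_derivative_ident] cinf_on_has_derivative[OF S that(1) LT[OF that(2)]]]
    by (simp add: o_def)
  show "h differentiable_on T" if "\<exists>g. cinf_on S g \<and> h = (\<lambda>x. g (L x))" for h :: "'a \<Rightarrow> 'c"
    using that L' differentiable_on_eq_differentiable_at[OF T] differentiable_def by blast
  show "\<exists>g'. ((\<exists>g. cinf_on S g \<and> g' = (\<lambda>x. g (L x))) \<or> cinf_on T g') \<and> (\<forall>x\<in>T. fd h x v = g' x)"
    if "\<exists>g. cinf_on S g \<and> h = (\<lambda>x. g (L x))" for h :: "'a \<Rightarrow> 'c" and v
  proof -
    from that obtain g where g: "cinf_on S g" and h: "h = (\<lambda>x. g (L x))" by blast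
    have "\<forall>x\<in>T. fd h x v = fd g (L x) (L v)" unfolding h using frechet_derivative_at[OF L'[OF g], symmetric] by simp
    then show ?thesis by (intro exI[of _ "\<lambda>x. fd g (L x) (L v)"]) (use cinf_on_fd[OF g] in blast)
  qed
qed (use g in blast)

lemma cinf_on_linear:
  fixes L :: "'a::euclidean_space \<Rightarrow> 'b::euclidean_space"
  assumes S: "open S" and L: "linear L"
  shows "cinf_on S L"
proof (rule cinf_on_coinduct[OF S, where P = "\<lambda>h. h = L"])
  have L': "(L has_derivative L) (at x)" for x
    by (rule bounded_linear_imp_has_derivative[OF linear_conv_bounded_linear[THEN iffD1, OF L]])
  show "h differentiable_on S" if "h = L" for h :: "'a \<Rightarrow> 'b"
    using that L' differentiable_on_eq_differentiable_at[OF S] differentiable_def by blast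
  show "\<exists>g'. (g' = L \<or> cinf_on S g') \<and> (\<forall>x\<in>S. fd h x v = g' x)" if "h = L" for h :: "'a \<Rightarrow> 'b" and v
    using that frechet_derivative_at[OF L'] cinf_on_const[OF S, of "L v"] by (intro exI[of _ "\<lambda>x. L v"]) simp
qed simp

lemma cinf_on_sum:
  assumes S: "open S" and "\<And>i. i \<in> I \<Longrightarrow> cinf_on S (f i)"
  shows "cinf_on S (\<lambda>x. \<Sum>i\<in>I. f i x)"
proof (cases "finite I")
  case True
  then show ?thesis using assms(2)
    by (induction I rule: finite_induct) (auto intro: cinf_on_const[OF S] cinf_on_add[OF S])
qed (simp add: cinf_on_const[OF S])

lemma cinf_on_uminus:
  assumes S: "open S" and f: "cinf_on S f"
  shows "cinf_on S (\<lambda>x. - f x)"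
  using cinf_on_scaleR[OF S cinf_on_const[OF S, of "-1::real"] f] by simp

lemma cinf_on_diff:
  assumes S: "open S" and f: "cinf_on S f" and g: "cinf_on S g"
  shows "cinf_on S (\<lambda>x. f x - g x)"
  using cinf_on_add[OF S f cinf_on_uminus[OF S g]] by simp

lemma cinf_on_divide_const:
  assumes S: "open S" and f: "cinf_on S (f::_\<Rightarrow>real)"
  shows "cinf_on S (\<lambda>x. f x / r)"
  using cinf_on_mult[OF S f cinf_on_const[OF S, of "1/r"]] by simp

lemma cinf_on_inner_left:
  assumes S: "open S" and f: "cinf_on S f"
  shows "cinf_on S (\<lambda>x. f x \<bullet> b)"
  using cinf_on_linear_comp[OF S f, of "\<lambda>y. y \<bullet> b"] by (simp add: bounded_linear.linear[OF bounded_linear_inner_left])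

section \<open>Symmetry of second derivatives\<close>

lemma has_derivative_along_line:
  assumes "(f has_derivative f') (at (a + s *\<^sub>R w))"
  shows "((\<lambda>s. f (a + s *\<^sub>R w)) has_derivative (\<lambda>h. f' (h *\<^sub>R w))) (at s)"
proof -
  have "((\<lambda>s. a + s *\<^sub>R w) has_derivative (\<lambda>h. h *\<^sub>R w)) (at s)"
    by (auto intro!: derivative_eq_intros)
  from diff_chain_at[OF this assms] show ?thesis by (simp add: o_def)
qed

lemma has_derivative_scaleR_arg:
  assumes "(f has_derivative f') F"
  shows "f' (h *\<^sub>R w) = h *\<^sub>R f' w"
  using has_derivative_bounded_linear[OF assms] by (simp add: bounded_linear.linear linear_scale)

lemma mvt_along_segment:
  fixes f :: "'a::real_normed_vector \<Rightarrow> real"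
  assumes t: "0 < t" and f': "\<And>s. 0 \<le> s \<Longrightarrow> s \<le> t \<Longrightarrow> (f has_derivative f' s) (at (a + s *\<^sub>R u))"
  shows "\<exists>\<sigma>. 0 \<le> \<sigma> \<and> \<sigma> \<le> t \<and> f (a + t *\<^sub>R u) - f a = t * f' \<sigma> u"
proof -
  have "((\<lambda>s. f (a + s *\<^sub>R u)) has_derivative (\<lambda>h. h * f' s u)) (at s within {0..t})"
    if "0 \<le> s" "s \<le> t" for s
  proof -
    have "((\<lambda>s. f (a + s *\<^sub>R u)) has_derivative (\<lambda>h. f' s (h *\<^sub>R u))) (at s)"
      by (rule has_derivative_along_line[OF f'[OF that]])
    moreover have "(\<lambda>h. f' s (h *\<^sub>R u)) = (\<lambda>h. h * f' s u)"
      using has_derivative_scaleR_arg[OF f'[OF that]] by auto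
    ultimately show ?thesis by (auto intro: has_derivative_at_withinI)
  qed
  from mvt_very_simple[of 0 t, OF _ this] t show ?thesis by (auto simp: mult.commute)
qed

lemma second_difference_mvt:
  fixes g :: "'a::euclidean_space \<Rightarrow> real"
  assumes S: "open S" and g: "cinf_on S g" and t: "t > 0"
    and box: "\<And>s r. 0 \<le> s \<Longrightarrow> s \<le> t \<Longrightarrow> 0 \<le> r \<Longrightarrow> r \<le> t \<Longrightarrow> x + s *\<^sub>R u + r *\<^sub>R v \<in> S"
  shows "\<exists>s r. 0 \<le> s \<and> s \<le> t \<and> 0 \<le> r \<and> r \<le> t \<and>
     g (x + t *\<^sub>R u + t *\<^sub>R v) - g (x + t *\<^sub>R u) - g (x + t *\<^sub>R v) + g x
       = t * t * fd (\<lambda>y. fd g y u) (x + s *\<^sub>R u + r *\<^sub>R v) v"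
proof -
  let ?gu = "\<lambda>y. fd g y u"
  have "((\<lambda>y. g (y + t *\<^sub>R v) - g y) has_derivative
      (\<lambda>w. fd g (x + s *\<^sub>R u + t *\<^sub>R v) w - fd g (x + s *\<^sub>R u) w)) (at (x + s *\<^sub>R u))"
    if "0 \<le> s" "s \<le> t" for s
  proof (rule has_derivative_diff)
    have "(g has_derivative fd g (x + s *\<^sub>R u + t *\<^sub>R v)) (at (x + s *\<^sub>R u + t *\<^sub>R v))"
      using cinf_on_has_derivative[OF S g box] that t by simp
    from diff_chain_at[OF has_derivative_add_const[OF has_derivative_ident] this]
    show "((\<lambda>y. g (y + t *\<^sub>R v)) has_derivative fd g (x + s *\<^sub>R u + t *\<^sub>R v)) (at (x + s *\<^sub>R u))"
      by (simp add: o_def)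
    show "(g has_derivative fd g (x + s *\<^sub>R u)) (at (x + s *\<^sub>R u))"
      using cinf_on_has_derivative[OF S g box[of s 0]] that t by simp
  qed
  then obtain \<sigma> where \<sigma>: "0 \<le> \<sigma>" "\<sigma> \<le> t" and e1:
    "g (x + t *\<^sub>R u + t *\<^sub>R v) - g (x + t *\<^sub>R u) - (g (x + t *\<^sub>R v) - g x)
       = t * (?gu (x + \<sigma> *\<^sub>R u + t *\<^sub>R v) - ?gu (x + \<sigma> *\<^sub>R u))"
    using mvt_along_segment[OF t, where f = "\<lambda>y. g (y + t *\<^sub>R v) - g y" and a = x and u = u
        and f' = "\<lambda>s w. fd g (x + s *\<^sub>R u + t *\<^sub>R v) w - fd g (x + s *\<^sub>R u) w"]
    by (auto simp: algebra_simps)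
  have "(?gu has_derivative fd ?gu (x + \<sigma> *\<^sub>R u + r *\<^sub>R v)) (at (x + \<sigma> *\<^sub>R u + r *\<^sub>R v))"
    if "0 \<le> r" "r \<le> t" for r
    by (rule cinf_on_has_derivative[OF S cinf_on_fd[OF g] box[OF \<sigma> that]])
  then obtain \<rho> where \<rho>: "0 \<le> \<rho>" "\<rho> \<le> t" and e2:
    "?gu (x + \<sigma> *\<^sub>R u + t *\<^sub>R v) - ?gu (x + \<sigma> *\<^sub>R u) = t * fd ?gu (x + \<sigma> *\<^sub>R u + \<rho> *\<^sub>R v) v"
    using mvt_along_segment[OF t, where f = ?gu and a = "x + \<sigma> *\<^sub>R u" and u = v
        and f' = "\<lambda>r. fd ?gu (x + \<sigma> *\<^sub>R u + r *\<^sub>R v)"]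
    by auto
  show ?thesis
    using \<sigma> \<rho> e1 e2 by (intro exI[of _ \<sigma>] exI[of _ \<rho>]) (simp add: algebra_simps)
qed

lemma small_parallelogram:
  fixes u v :: "'a::real_normed_vector"
  assumes "\<delta> > 0"
  obtains t where "t > 0" "\<And>s r. 0 \<le> s \<Longrightarrow> s \<le> t \<Longrightarrow> 0 \<le> r \<Longrightarrow> r \<le> t \<Longrightarrow> norm (s *\<^sub>R u + r *\<^sub>R v) < \<delta>"
proof
  let ?t = "\<delta> / (2 * (norm u + norm v + 1))"
  have pos: "norm u + norm v + 1 > 0" by (simp add: add_nonneg_pos)
  then show "?t > 0" using assms by simp
  fix s r assume "0 \<le> s" "s \<le> ?t" "0 \<le> r" "r \<le> ?t"
  then have "norm (s *\<^sub>R u + r *\<^sub>R v) \<le> ?t * (norm u + norm v)"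
    using norm_triangle_ineq[of "s *\<^sub>R u" "r *\<^sub>R v"]
      mult_right_mono[of s ?t "norm u"] mult_right_mono[of r ?t "norm v"]
    by (simp add: distrib_left)
  also have "\<dots> < ?t * (norm u + norm v + 1)"
    using assms pos by (intro mult_strict_left_mono) simp_all
  also have "\<dots> = \<delta> / 2" using pos by (simp add: field_simps)
  also have "\<dots> < \<delta>" using assms by simp
  finally show "norm (s *\<^sub>R u + r *\<^sub>R v) < \<delta>" .
qed

lemma cinf_on_isCont:
  assumes S: "open S" and f: "cinf_on S f" and x: "x \<in> S"
  shows "isCont f x"
  using differentiable_imp_continuous_on[OF cinf_on_differentiable[OF f]] continuous_on_eq_continuous_at[OF S] x
  by blast

text \<open>Schwarz: both second differences are the same quantity, and each is approximated by the
  corresponding mixed derivative via \<open>second_difference_mvt\<close>.\<close>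

lemma fd_fd_commute_real:
  fixes g :: "'a::euclidean_space \<Rightarrow> real"
  assumes S: "open S" and g: "cinf_on S g" and x: "x \<in> S"
  shows "fd (\<lambda>y. fd g y u) x v = fd (\<lambda>y. fd g y v) x u"
proof (rule ccontr)
  let ?A = "\<lambda>y. fd (\<lambda>y. fd g y u) y v"
  let ?B = "\<lambda>y. fd (\<lambda>y. fd g y v) y u"
  assume "?A x \<noteq> ?B x"
  then have d: "dist (?A x) (?B x) / 3 > 0" by simp
  obtain dA where dA: "dA > 0" "\<And>y. dist y x < dA \<Longrightarrow> dist (?A y) (?A x) < dist (?A x) (?B x) / 3"
    using cinf_on_isCont[OF S cinf_on_fd[OF cinf_on_fd[OF g]] x, unfolded continuous_at_eps_delta] d by blast
  obtain dB where dB: "dB > 0" "\<And>y. dist y x < dB \<Longrightarrow> dist (?B y) (?B x) < dist (?A x) (?B x) / 3"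
    using cinf_on_isCont[OF S cinf_on_fd[OF cinf_on_fd[OF g]] x, unfolded continuous_at_eps_delta] d by blast
  obtain \<rho> where \<rho>: "\<rho> > 0" "ball x \<rho> \<subseteq> S" using S x open_contains_ball by blast
  define \<delta> where "\<delta> = min \<rho> (min dA dB)"
  obtain t where t: "t > 0"
    and small: "\<And>s r. 0 \<le> s \<Longrightarrow> s \<le> t \<Longrightarrow> 0 \<le> r \<Longrightarrow> r \<le> t \<Longrightarrow> norm (s *\<^sub>R u + r *\<^sub>R v) < \<delta>"
    using small_parallelogram[of \<delta>] \<rho> dA dB unfolding \<delta>_def by auto
  have near: "dist (x + s *\<^sub>R u + r *\<^sub>R v) x < \<delta>" "dist (x + s *\<^sub>R v + r *\<^sub>R u) x < \<delta>"
    if "0 \<le> s" "s \<le> t" "0 \<le> r" "r \<le> t" for s r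
    using small[OF that] small[of r s] that by (simp_all add: dist_norm add.commute add.assoc)
  have inS: "x + s *\<^sub>R u + r *\<^sub>R v \<in> S" "x + s *\<^sub>R v + r *\<^sub>R u \<in> S"
    if "0 \<le> s" "s \<le> t" "0 \<le> r" "r \<le> t" for s r
    using near[OF that] \<rho>(2) unfolding \<delta>_def by (auto simp: dist_commute subset_iff)
  obtain s1 r1 where sr1: "0 \<le> s1" "s1 \<le> t" "0 \<le> r1" "r1 \<le> t" and
    e1: "g (x + t *\<^sub>R u + t *\<^sub>R v) - g (x + t *\<^sub>R u) - g (x + t *\<^sub>R v) + g x = t * t * ?A (x + s1 *\<^sub>R u + r1 *\<^sub>R v)"
    using second_difference_mvt[OF S g t, of x u v] inS(1) by blast
  obtain s2 r2 where sr2: "0 \<le> s2" "s2 \<le> t" "0 \<le> r2" "r2 \<le> t" and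
    e2: "g (x + t *\<^sub>R v + t *\<^sub>R u) - g (x + t *\<^sub>R v) - g (x + t *\<^sub>R u) + g x = t * t * ?B (x + s2 *\<^sub>R v + r2 *\<^sub>R u)"
    using second_difference_mvt[OF S g t, of x v u] inS(2) by blast
  have "t * t * ?A (x + s1 *\<^sub>R u + r1 *\<^sub>R v) = t * t * ?B (x + s2 *\<^sub>R v + r2 *\<^sub>R u)"
    using e1 e2 by (simp add: algebra_simps)
  then have "?A (x + s1 *\<^sub>R u + r1 *\<^sub>R v) = ?B (x + s2 *\<^sub>R v + r2 *\<^sub>R u)"
    using t by simp
  moreover have "dist (?B (x + s2 *\<^sub>R v + r2 *\<^sub>R u)) (?B x) < dist (?A x) (?B x) / 3"
    by (rule dB(2)) (use near(2)[OF sr2] in \<open>simp add: \<delta>_def\<close>)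
  ultimately have "dist (?A (x + s1 *\<^sub>R u + r1 *\<^sub>R v)) (?B x) < dist (?A x) (?B x) / 3"
    by simp
  moreover have "dist (?A (x + s1 *\<^sub>R u + r1 *\<^sub>R v)) (?A x) < dist (?A x) (?B x) / 3"
    by (rule dA(2)) (use near(1)[OF sr1] in \<open>simp add: \<delta>_def\<close>)
  moreover have "dist (?A x) (?B x) \<le> dist (?A (x + s1 *\<^sub>R u + r1 *\<^sub>R v)) (?A x)
      + dist (?A (x + s1 *\<^sub>R u + r1 *\<^sub>R v)) (?B x)"
    by (rule dist_triangle3)
  ultimately show False using d by linarith
qed

lemma fd_inner_left:
  assumes "(f has_derivative f') (at x)"
  shows "fd (\<lambda>y. f y \<bullet> b) x = (\<lambda>w. f' w \<bullet> b)"
  by (rule frechet_derivative_at[symmetric]) (rule has_derivative_inner_left[OF assms])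

lemma fd_fd_commute:
  fixes f :: "'a::euclidean_space \<Rightarrow> 'b::euclidean_space"
  assumes S: "open S" and f: "cinf_on S f" and x: "x \<in> S"
  shows "fd (\<lambda>y. fd f y u) x v = fd (\<lambda>y. fd f y v) x u"
proof (rule euclidean_eqI)
  fix b :: 'b assume b: "b \<in> Basis"
  let ?g = "\<lambda>y. f y \<bullet> b"
  have g: "cinf_on S ?g" by (rule cinf_on_inner_left[OF S f])
  have dg: "\<And>y w. y \<in> S \<Longrightarrow> fd ?g y w = fd f y w \<bullet> b"
    using fd_inner_left[OF cinf_on_has_derivative[OF S f]] by simp
  have key: "fd (\<lambda>y. fd ?g y w) x w' = fd (\<lambda>y. fd f y w) x w' \<bullet> b" for w w'
  proof -
    have "fd (\<lambda>y. fd ?g y w) x = fd (\<lambda>y. fd f y w \<bullet> b) x"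
      by (rule fd_cong_open[OF S x]) (simp add: dg)
    also have "\<dots> = (\<lambda>w'. fd (\<lambda>y. fd f y w) x w' \<bullet> b)"
      by (rule fd_inner_left[OF cinf_on_has_derivative[OF S cinf_on_fd[OF f] x]])
    finally show ?thesis by simp
  qed
  show "fd (\<lambda>y. fd f y u) x v \<bullet> b = fd (\<lambda>y. fd f y v) x u \<bullet> b"
    using key[of u v] key[of v u] fd_fd_commute_real[OF S g x, of u v] by simp
qed

section \<open>Connections given by a Christoffel form\<close>

lemma has_derivative_basis_expansion:
  assumes "(f has_derivative f') F"
  shows "f' w = (\<Sum>b\<in>Basis. (w \<bullet> b) *\<^sub>R f' b)"
proof -
  have lin: "linear f'" by (rule has_derivative_linear[OF assms])
  have "f' w = f' (\<Sum>b\<in>Basis. (w \<bullet> b) *\<^sub>R b)" by (simp add: euclidean_representation)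
  also have "\<dots> = (\<Sum>b\<in>Basis. (w \<bullet> b) *\<^sub>R f' b)" by (simp add: linear_sum[OF lin] linear_scale[OF lin])
  finally show ?thesis .
qed

text \<open>\<open>cform g\<close> is the bilinear form \<open>\<Gamma>\<close> whose values on basis vectors are the fields \<open>g a b\<close>;
  \<open>cform_conn g\<close> is the connection \<open>\<nabla>\<^sub>XY = DY\<cdot>X + \<Gamma>(X, Y)\<close> and \<open>cform_curv g\<close> its curvature tensor.\<close>

definition cform :: "('a::euclidean_space \<Rightarrow> 'a \<Rightarrow> 'a \<Rightarrow> 'a) \<Rightarrow> 'a \<Rightarrow> 'a \<Rightarrow> 'a \<Rightarrow> 'a" where
  "cform g q x y = (\<Sum>a\<in>Basis. \<Sum>b\<in>Basis. ((x \<bullet> a) * (y \<bullet> b)) *\<^sub>R g a b q)"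

definition cform_deriv :: "('a::euclidean_space \<Rightarrow> 'a \<Rightarrow> 'a \<Rightarrow> 'a) \<Rightarrow> 'a \<Rightarrow> 'a \<Rightarrow> 'a \<Rightarrow> 'a \<Rightarrow> 'a" where
  "cform_deriv g q w x y = (\<Sum>a\<in>Basis. \<Sum>b\<in>Basis. ((x \<bullet> a) * (y \<bullet> b)) *\<^sub>R fd (g a b) q w)"

definition cform_conn :: "('a::euclidean_space \<Rightarrow> 'a \<Rightarrow> 'a \<Rightarrow> 'a) \<Rightarrow> ('a \<Rightarrow> 'a) \<Rightarrow> ('a \<Rightarrow> 'a) \<Rightarrow> 'a \<Rightarrow> 'a" where
  "cform_conn g X Y = (\<lambda>q. fd Y q (X q) + cform g q (X q) (Y q))"

definition hess :: "('a::euclidean_space \<Rightarrow> 'a) \<Rightarrow> 'a \<Rightarrow> 'a \<Rightarrow> 'a \<Rightarrow> 'a" where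
  "hess Z q y w = (\<Sum>a\<in>Basis. (y \<bullet> a) *\<^sub>R fd (\<lambda>q. fd Z q a) q w)"

definition cform_curv :: "('a::euclidean_space \<Rightarrow> 'a \<Rightarrow> 'a \<Rightarrow> 'a) \<Rightarrow> 'a \<Rightarrow> 'a \<Rightarrow> 'a \<Rightarrow> 'a \<Rightarrow> 'a" where
  "cform_curv g q x y z = cform_deriv g q x y z - cform_deriv g q y x z + cform g q x (cform g q y z) - cform g q y (cform g q x z)"

definition curv_dot_tensor :: "('a \<Rightarrow> 'a \<Rightarrow> 'a \<Rightarrow> 'a::real_vector) \<Rightarrow> 'a \<Rightarrow> 'a \<Rightarrow> 'a \<Rightarrow> 'a \<Rightarrow> 'a \<Rightarrow> 'a" where
  "curv_dot_tensor K x y z w u = K x y (K z w u) - K (K x y z) w u - K z (K x y w) u - K z w (K x y u)"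

lemma cform_diff_left: "cform g q (x - y) z = cform g q x z - cform g q y z"
  unfolding cform_def by (simp add: inner_diff_left left_diff_distrib scaleR_diff_left sum_subtractf)

lemma cform_add_right: "cform g q x (y + z) = cform g q x y + cform g q x z"
  unfolding cform_def by (simp add: inner_add_left distrib_left scaleR_add_left sum.distrib)

lemma cform_has_derivative:
  assumes X: "(X has_derivative X') (at q)" and Y: "(Y has_derivative Y') (at q)"
    and g: "\<And>a b. (g a b has_derivative fd (g a b) q) (at q)"
  shows "((\<lambda>q. cform g q (X q) (Y q)) has_derivative
     (\<lambda>w. cform g q (X' w) (Y q) + cform g q (X q) (Y' w) + cform_deriv g q w (X q) (Y q))) (at q)"
proof -
  have "((\<lambda>q. cform g q (X q) (Y q)) has_derivative
     (\<lambda>w. \<Sum>a\<in>Basis. \<Sum>b\<in>Basis. ((X q \<bullet> a) * (Y q \<bullet> b)) *\<^sub>R fd (g a b) q w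
          + ((X q \<bullet> a) * (Y' w \<bullet> b) + (X' w \<bullet> a) * (Y q \<bullet> b)) *\<^sub>R g a b q)) (at q)"
    unfolding cform_def
    by (intro has_derivative_sum has_derivative_scaleR has_derivative_mult has_derivative_inner_left X Y g)
  moreover have "(\<lambda>w. \<Sum>a\<in>Basis. \<Sum>b\<in>Basis. ((X q \<bullet> a) * (Y q \<bullet> b)) *\<^sub>R fd (g a b) q w
          + ((X q \<bullet> a) * (Y' w \<bullet> b) + (X' w \<bullet> a) * (Y q \<bullet> b)) *\<^sub>R g a b q)
     = (\<lambda>w. cform g q (X' w) (Y q) + cform g q (X q) (Y' w) + cform_deriv g q w (X q) (Y q))"
    unfolding cform_def cform_deriv_def by (auto simp: sum.distrib scaleR_add_left algebra_simps)
  ultimately show ?thesis by simp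
qed

lemma fd_along_has_derivative:
  assumes S: "open S" and Y: "cinf_on S Y" and Z: "cinf_on S Z" and q: "q \<in> S"
  shows "((\<lambda>q. fd Z q (Y q)) has_derivative (\<lambda>w. fd Z q (fd Y q w) + hess Z q (Y q) w)) (at q)"
proof -
  have eq: "\<And>x. x \<in> S \<Longrightarrow> (\<Sum>a\<in>Basis. (Y x \<bullet> a) *\<^sub>R fd Z x a) = fd Z x (Y x)"
    using has_derivative_basis_expansion[OF cinf_on_has_derivative[OF S Z], symmetric] by blast
  have "((\<lambda>q. \<Sum>a\<in>Basis. (Y q \<bullet> a) *\<^sub>R fd Z q a) has_derivative
      (\<lambda>w. \<Sum>a\<in>Basis. (Y q \<bullet> a) *\<^sub>R fd (\<lambda>q. fd Z q a) q w + (fd Y q w \<bullet> a) *\<^sub>R fd Z q a)) (at q)"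
    by (rule has_derivative_sum, rule has_derivative_scaleR[OF has_derivative_inner_left[OF cinf_on_has_derivative[OF S Y q]]
        cinf_on_has_derivative[OF S cinf_on_fd[OF Z] q]])
  moreover have "(\<lambda>w. \<Sum>a\<in>Basis. (Y q \<bullet> a) *\<^sub>R fd (\<lambda>q. fd Z q a) q w + (fd Y q w \<bullet> a) *\<^sub>R fd Z q a)
     = (\<lambda>w. fd Z q (fd Y q w) + hess Z q (Y q) w)"
  proof
    fix w
    have "(\<Sum>a\<in>Basis. (fd Y q w \<bullet> a) *\<^sub>R fd Z q a) = fd Z q (fd Y q w)"
      by (rule has_derivative_basis_expansion[OF cinf_on_has_derivative[OF S Z q], symmetric])
    then show "(\<Sum>a\<in>Basis. (Y q \<bullet> a) *\<^sub>R fd (\<lambda>q. fd Z q a) q w + (fd Y q w \<bullet> a) *\<^sub>R fd Z q a)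
     = fd Z q (fd Y q w) + hess Z q (Y q) w"
      unfolding hess_def by (simp add: sum.distrib)
  qed
  ultimately have "((\<lambda>q. \<Sum>a\<in>Basis. (Y q \<bullet> a) *\<^sub>R fd Z q a) has_derivative
      (\<lambda>w. fd Z q (fd Y q w) + hess Z q (Y q) w)) (at q)" by simp
  then show ?thesis
    by (rule has_derivative_transform_within_open[OF _ S q]) (use eq in auto)
qed

lemma hess_sym:
  assumes S: "open S" and Z: "cinf_on S Z" and q: "q \<in> S"
  shows "hess Z q y w = hess Z q w y"
proof -
  let ?Z2 = "\<lambda>a b. fd (\<lambda>q. fd Z q a) q b"
  have ex: "\<And>a v. ?Z2 a v = (\<Sum>b\<in>Basis. (v \<bullet> b) *\<^sub>R ?Z2 a b)"
    using has_derivative_basis_expansion[OF cinf_on_has_derivative[OF S cinf_on_fd[OF Z] q]] by metis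
  have sw: "\<And>a b. ?Z2 a b = ?Z2 b a" using fd_fd_commute[OF S Z q] by metis
  have "hess Z q y w = (\<Sum>a\<in>Basis. \<Sum>b\<in>Basis. ((y \<bullet> a) * (w \<bullet> b)) *\<^sub>R ?Z2 a b)"
    unfolding hess_def by (subst ex) (simp add: scaleR_sum_right)
  also have "\<dots> = (\<Sum>b\<in>Basis. \<Sum>a\<in>Basis. ((y \<bullet> a) * (w \<bullet> b)) *\<^sub>R ?Z2 b a)"
    by (subst sum.swap) (simp add: sw)
  also have "\<dots> = hess Z q w y"
    unfolding hess_def by (subst ex) (simp add: scaleR_sum_right mult.commute)
  finally show ?thesis .
qed

lemma cform_conn_has_derivative:
  assumes S: "open S" and g: "\<And>a b. cinf_on S (g a b)" and Y: "cinf_on S Y" and Z: "cinf_on S Z" and q: "q \<in> S"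
  shows "(cform_conn g Y Z has_derivative (\<lambda>w. fd Z q (fd Y q w) + hess Z q (Y q) w
     + (cform g q (fd Y q w) (Z q) + cform g q (Y q) (fd Z q w) + cform_deriv g q w (Y q) (Z q)))) (at q)"
  unfolding cform_conn_def
  by (rule has_derivative_add[OF fd_along_has_derivative[OF S Y Z q] cform_has_derivative[OF cinf_on_has_derivative[OF S Y q] cinf_on_has_derivative[OF S Z q] cinf_on_has_derivative[OF S g q]]])

lemma curv_cform_conn:
  assumes S: "open S" and g: "\<And>a b. cinf_on S (g a b)"
    and X: "cinf_on S X" and Y: "cinf_on S Y" and Z: "cinf_on S Z" and q: "q \<in> S"
  shows "curv (cform_conn g) X Y Z q = cform_curv g q (X q) (Y q) (Z q)"
proof -
  have d1: "fd (cform_conn g Y Z) q = (\<lambda>w. fd Z q (fd Y q w) + hess Z q (Y q) w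
     + (cform g q (fd Y q w) (Z q) + cform g q (Y q) (fd Z q w) + cform_deriv g q w (Y q) (Z q)))"
    by (rule frechet_derivative_at[symmetric, OF cform_conn_has_derivative[OF S g Y Z q]])
  have d2: "fd (cform_conn g X Z) q = (\<lambda>w. fd Z q (fd X q w) + hess Z q (X q) w
     + (cform g q (fd X q w) (Z q) + cform g q (X q) (fd Z q w) + cform_deriv g q w (X q) (Z q)))"
    by (rule frechet_derivative_at[symmetric, OF cform_conn_has_derivative[OF S g X Z q]])
  have linZ: "linear (fd Z q)" by (rule has_derivative_linear[OF cinf_on_has_derivative[OF S Z q]])
  have lie: "lie X Y q = fd Y q (X q) - fd X q (Y q)" by (simp add: lie_def)
  have hs: "hess Z q (Y q) (X q) = hess Z q (X q) (Y q)" by (rule hess_sym[OF S Z q])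
  show ?thesis
    unfolding curv_def cform_curv_def cform_conn_def[of g X] cform_conn_def[of g Y] cform_conn_def[of g "lie X Y"]
    by (simp only: d1 d2 lie linear_diff[OF linZ] cform_diff_left cform_add_right hs flip: cform_conn_def)
      (simp add: cform_conn_def cform_add_right algebra_simps)
qed

lemma cinf_on_cform:
  assumes S: "open S" and g: "\<And>a b. cinf_on S (g a b)" and X: "cinf_on S X" and Y: "cinf_on S Y"
  shows "cinf_on S (\<lambda>q. cform g q (X q) (Y q))"
  unfolding cform_def
  by (intro cinf_on_sum cinf_on_scaleR cinf_on_mult cinf_on_inner_left S X Y g)

lemma cinf_on_fd_along:
  assumes S: "open S" and X: "cinf_on S X" and Y: "cinf_on S Y"
  shows "cinf_on S (\<lambda>q. fd Y q (X q))"
proof (rule cinf_on_cong[OF S])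
  show "cinf_on S (\<lambda>q. \<Sum>a\<in>Basis. (X q \<bullet> a) *\<^sub>R fd Y q a)"
    by (intro cinf_on_sum cinf_on_scaleR cinf_on_inner_left cinf_on_fd S X Y)
  show "\<And>x. x \<in> S \<Longrightarrow> (\<Sum>a\<in>Basis. (X x \<bullet> a) *\<^sub>R fd Y x a) = fd Y x (X x)"
    using has_derivative_basis_expansion[OF cinf_on_has_derivative[OF S Y], symmetric] by blast
qed

lemma cinf_on_cform_conn:
  assumes S: "open S" and g: "\<And>a b. cinf_on S (g a b)" and X: "cinf_on S X" and Y: "cinf_on S Y"
  shows "cinf_on S (cform_conn g X Y)"
  unfolding cform_conn_def by (intro cinf_on_add cinf_on_fd_along cinf_on_cform S g X Y)

lemma cinf_on_lie:
  assumes S: "open S" and X: "cinf_on S X" and Y: "cinf_on S Y"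
  shows "cinf_on S (lie X Y)"
  unfolding lie_def by (intro cinf_on_diff cinf_on_fd_along S X Y)

lemma cinf_on_cform_deriv:
  assumes S: "open S" and g: "\<And>a b. cinf_on S (g a b)" and X: "cinf_on S X" and Y: "cinf_on S Y" and Z: "cinf_on S Z"
  shows "cinf_on S (\<lambda>q. cform_deriv g q (X q) (Y q) (Z q))"
  unfolding cform_deriv_def by (intro cinf_on_sum cinf_on_scaleR cinf_on_mult cinf_on_inner_left cinf_on_fd_along S X Y Z g)

lemma cinf_on_cform_curv:
  assumes S: "open S" and g: "\<And>a b. cinf_on S (g a b)" and X: "cinf_on S X" and Y: "cinf_on S Y" and Z: "cinf_on S Z"
  shows "cinf_on S (\<lambda>q. cform_curv g q (X q) (Y q) (Z q))"
  unfolding cform_curv_def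
  by (intro cinf_on_add cinf_on_diff cinf_on_cform_deriv cinf_on_cform S g X Y Z)

definition has_cform :: "(('a::euclidean_space \<Rightarrow> 'a) \<Rightarrow> ('a \<Rightarrow> 'a) \<Rightarrow> ('a \<Rightarrow> 'a)) \<Rightarrow> ('a \<Rightarrow> 'a \<Rightarrow> 'a \<Rightarrow> 'a) \<Rightarrow> 'a set \<Rightarrow> bool" where
  "has_cform D g S \<longleftrightarrow> (\<forall>X Y. cinf_on S X \<longrightarrow> cinf_on S Y \<longrightarrow> (\<forall>q\<in>S. D X Y q = cform_conn g X Y q))"

lemma curv_eq_cform_curv:
  assumes S: "open S" and g: "\<And>a b. cinf_on S (g a b)" and D: "has_cform D g S"
    and X: "cinf_on S X" and Y: "cinf_on S Y" and Z: "cinf_on S Z" and q: "q \<in> S"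
  shows "curv D X Y Z q = cform_curv g q (X q) (Y q) (Z q)"
proof -
  have ag: "\<And>X Y q. cinf_on S X \<Longrightarrow> cinf_on S Y \<Longrightarrow> q \<in> S \<Longrightarrow> D X Y q = cform_conn g X Y q"
    using D unfolding has_cform_def by blast
  have step: "D A (D B Z) q = cform_conn g A (cform_conn g B Z) q" if A: "cinf_on S A" and B: "cinf_on S B" for A B
  proof -
    have c: "cinf_on S (D B Z)"
      by (rule cinf_on_cong[OF S cinf_on_cform_conn[OF S g B Z]]) (simp add: ag[OF B Z])
    have "D A (D B Z) q = cform_conn g A (D B Z) q" by (rule ag[OF A c q])
    also have "\<dots> = fd (cform_conn g B Z) q (A q) + cform g q (A q) (cform_conn g B Z q)"
      using fd_cong_open[OF S q, of "D B Z" "cform_conn g B Z"] ag[OF B Z] q by (simp add: cform_conn_def[of g A])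
    also have "\<dots> = cform_conn g A (cform_conn g B Z) q" by (simp only: cform_conn_def[of g A])
    finally show ?thesis .
  qed
  have "curv D X Y Z q = curv (cform_conn g) X Y Z q"
    unfolding curv_def using step[OF X Y] step[OF Y X] ag[OF cinf_on_lie[OF S X Y] Z q] by simp
  also have "\<dots> = cform_curv g q (X q) (Y q) (Z q)" by (rule curv_cform_conn[OF S g X Y Z q])
  finally show ?thesis .
qed

lemma cinf_on_curv:
  assumes S: "open S" and g: "\<And>a b. cinf_on S (g a b)" and D: "has_cform D g S"
    and X: "cinf_on S X" and Y: "cinf_on S Y" and Z: "cinf_on S Z"
  shows "cinf_on S (curv D X Y Z)"
  by (rule cinf_on_cong[OF S cinf_on_cform_curv[OF S g X Y Z]]) (simp add: curv_eq_cform_curv[OF S g D X Y Z])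

lemma semi_symmetric_iff_cform_curv:
  assumes S: "open S" and g: "\<And>a b. cinf_on S (g a b)" and D: "has_cform D g S"
  shows "semi_symmetric D S \<longleftrightarrow> (\<forall>q\<in>S. \<forall>x y z w u. curv_dot_tensor (cform_curv g q) x y z w u = 0)"
proof -
  have cdc: "curv_dot_curv D X Y Z W U q = curv_dot_tensor (cform_curv g q) (X q) (Y q) (Z q) (W q) (U q)"
    if X: "cinf_on S X" and Y: "cinf_on S Y" and Z: "cinf_on S Z" and W: "cinf_on S W" and U: "cinf_on S U"
      and q: "q \<in> S" for X Y Z W U q
    unfolding curv_dot_curv_def curv_dot_tensor_def
    by (simp add: curv_eq_cform_curv[OF S g D _ _ _ q] cinf_on_curv[OF S g D] X Y Z W U)
  show ?thesis
  proof
    assume ss: "semi_symmetric D S"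
    show "\<forall>q\<in>S. \<forall>x y z w u. curv_dot_tensor (cform_curv g q) x y z w u = 0"
    proof (intro ballI allI)
      fix q x y z w u assume q: "q \<in> S"
      have c: "\<And>v::'a. cinf_on S (\<lambda>_. v)" by (rule cinf_on_const[OF S])
      have "curv_dot_curv D (\<lambda>_. x) (\<lambda>_. y) (\<lambda>_. z) (\<lambda>_. w) (\<lambda>_. u) q = 0"
        using ss q c unfolding semi_symmetric_def by blast
      then show "curv_dot_tensor (cform_curv g q) x y z w u = 0" using cdc[OF c c c c c q] by simp
    qed
  next
    assume "\<forall>q\<in>S. \<forall>x y z w u. curv_dot_tensor (cform_curv g q) x y z w u = 0"
    then show "semi_symmetric D S" unfolding semi_symmetric_def using cdc by simp
  qed
qed

lemma cform_bilinear:
  assumes "bilinear (G q)"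
  shows "cform (\<lambda>a b q. G q a b) q x y = G q x y"
proof -
  have "G q x y = G q (\<Sum>a\<in>Basis. (x \<bullet> a) *\<^sub>R a) (\<Sum>b\<in>Basis. (y \<bullet> b) *\<^sub>R b)"
    by (simp add: euclidean_representation)
  also have "\<dots> = (\<Sum>(a, b)\<in>Basis \<times> Basis. G q ((x \<bullet> a) *\<^sub>R a) ((y \<bullet> b) *\<^sub>R b))"
    by (rule bilinear_sum[OF assms])
  also have "\<dots> = (\<Sum>(a, b)\<in>Basis \<times> Basis. ((x \<bullet> a) * (y \<bullet> b)) *\<^sub>R G q a b)"
    by (simp add: bilinear_lmul[OF assms] bilinear_rmul[OF assms] mult.commute)
  also have "\<dots> = cform (\<lambda>a b q. G q a b) q x y"
    unfolding cform_def by (simp add: sum.cartesian_product)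
  finally show ?thesis by simp
qed

section \<open>The base connection\<close>

lemma vec_lambda_eq_sum_axis: "(\<chi> h. f h) = (\<Sum>h\<in>UNIV. f h *\<^sub>R axis h (1::real))"
  by (simp add: vec_eq_iff sum_component axis_def if_distrib sum.delta cong: if_cong)

lemma cinf_on_vec_lambda:
  assumes S: "open S" and f: "\<And>h. cinf_on S (f h)"
  shows "cinf_on S (\<lambda>x. (\<chi> h. f h x) :: real^'n::finite)"
  unfolding vec_lambda_eq_sum_axis by (intro cinf_on_sum cinf_on_scaleR cinf_on_const S f)

definition chris :: "('n::finite \<Rightarrow> 'n \<Rightarrow> 'n \<Rightarrow> real^'n \<Rightarrow> real) \<Rightarrow> real^'n \<Rightarrow> real^'n \<Rightarrow> real^'n \<Rightarrow> real^'n" where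
  "chris Gam x a b = (\<chi> h. \<Sum>i\<in>UNIV. \<Sum>j\<in>UNIV. a $ i * b $ j * Gam h i j x)"

lemma bilinear_chris: "bilinear (chris Gam x)"
  unfolding bilinear_def linear_iff chris_def
  by (simp add: vec_eq_iff algebra_simps sum.distrib sum_distrib_left)

lemma base_conn_eq_cform_conn: "base_conn Gam = cform_conn (\<lambda>a b x. chris Gam x a b)"
  unfolding base_conn_def cform_conn_def
  by (intro ext, simp only: cform_bilinear[OF bilinear_chris]) (simp add: chris_def)

lemma cinf_on_chris:
  assumes S: "open U" and G: "\<And>h i j. cinf_on U (Gam h i j)"
  shows "cinf_on U (\<lambda>x. chris Gam x a b)"
  unfolding chris_def by (intro cinf_on_vec_lambda cinf_on_sum cinf_on_mult cinf_on_const S G)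

definition base_curv :: "('n::finite \<Rightarrow> 'n \<Rightarrow> 'n \<Rightarrow> real^'n \<Rightarrow> real) \<Rightarrow> real^'n \<Rightarrow> real^'n \<Rightarrow> real^'n \<Rightarrow> real^'n \<Rightarrow> real^'n" where
  "base_curv Gam x a b c = fd (\<lambda>x. chris Gam x b c) x a + chris Gam x a (chris Gam x b c)
     - fd (\<lambda>x. chris Gam x a c) x b - chris Gam x b (chris Gam x a c)"

lemma curv_base_conn_const: "curv (base_conn Gam) (\<lambda>_. a) (\<lambda>_. b) (\<lambda>_. c) x = base_curv Gam x a b c"
proof -
  have bc: "\<And>a b. base_conn Gam (\<lambda>_. a) (\<lambda>_. b) = (\<lambda>x. chris Gam x a b)"
    unfolding base_conn_def chris_def by (simp add: frechet_derivative_const)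
  have lie: "lie (\<lambda>_. a) (\<lambda>_. b) = (\<lambda>_. 0)" unfolding lie_def by (simp add: frechet_derivative_const)
  have z: "base_conn Gam (\<lambda>_. 0) (\<lambda>_. c) x = 0"
    unfolding base_conn_def by (simp add: frechet_derivative_const) (simp add: vec_eq_iff)
  show ?thesis
    unfolding curv_def base_curv_def bc lie z
    by (simp add: base_conn_def chris_def) (simp add: vec_eq_iff)
qed

lemma Rc_eq_base_curv: "Rc Gam i j k h x = base_curv Gam x (axis i 1) (axis j 1) (axis k 1) $ h"
  unfolding Rc_def curv_base_conn_const ..

lemma base_conn_has_cform: "has_cform (base_conn Gam) (\<lambda>a b x. chris Gam x a b) U"
  unfolding has_cform_def base_conn_eq_cform_conn by simp

lemma cform_curv_chris:
  assumes U: "open U" and G: "\<And>h i j. cinf_on U (Gam h i j)" and x: "x \<in> U"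
  shows "cform_curv (\<lambda>a b x. chris Gam x a b) x a b c = base_curv Gam x a b c"
proof -
  have c: "\<And>v. cinf_on U (\<lambda>_::real^'a. v::real^'a)" by (rule cinf_on_const[OF U])
  have "cform_curv (\<lambda>a b x. chris Gam x a b) x a b c = curv (base_conn Gam) (\<lambda>_. a) (\<lambda>_. b) (\<lambda>_. c) x"
    by (rule curv_eq_cform_curv[OF U cinf_on_chris[OF U G] base_conn_has_cform c c c x, symmetric])
  then show ?thesis by (simp only: curv_base_conn_const)
qed

lemma base_semi_symmetric_iff:
  assumes U: "open U" and G: "\<And>h i j. cinf_on U (Gam h i j)"
  shows "semi_symmetric (base_conn Gam) U \<longleftrightarrow> (\<forall>x\<in>U. \<forall>a b c d e. curv_dot_tensor (base_curv Gam x) a b c d e = 0)"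
proof -
  have eq: "\<And>x. x \<in> U \<Longrightarrow> cform_curv (\<lambda>a b x. chris Gam x a b) x = base_curv Gam x"
    using cform_curv_chris[OF U G] by (intro ext) simp
  show ?thesis
    unfolding semi_symmetric_iff_cform_curv[OF U cinf_on_chris[OF U G] base_conn_has_cform] using eq by simp
qed

section \<open>The connection on the cotangent bundle\<close>

definition adapted :: "('n::finite \<Rightarrow> 'n \<Rightarrow> 'n \<Rightarrow> real^'n \<Rightarrow> real) \<Rightarrow> (real^'n) \<times> (real^'n) \<Rightarrow> real^'n \<Rightarrow> real^'n \<Rightarrow> (real^'n) \<times> (real^'n)" where
  "adapted Gam q h v = (\<Sum>j\<in>UNIV. h $ j *\<^sub>R Eh Gam j q) + (\<Sum>j\<in>UNIV. v $ j *\<^sub>R Ev j q)"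

definition vert_coord :: "('n::finite \<Rightarrow> 'n \<Rightarrow> 'n \<Rightarrow> real^'n \<Rightarrow> real) \<Rightarrow> (real^'n) \<times> (real^'n) \<Rightarrow> (real^'n) \<times> (real^'n) \<Rightarrow> 'n \<Rightarrow> real" where
  "vert_coord Gam q y j = snd y $ j - (\<Sum>a\<in>UNIV. \<Sum>h\<in>UNIV. snd q $ a * Gam a j h (fst q) * fst y $ h)"

lemma vcomp_eq_vert_coord: "vcomp Gam Y j q = vert_coord Gam q (Y q) j"
  unfolding vcomp_def vert_coord_def ..

lemma sum_axis_nth: "(\<Sum>j\<in>UNIV. h $ j *\<^sub>R axis j (1::real)) = h"
  using vec_lambda_eq_sum_axis[of "\<lambda>j. h $ j"] by simp

lemma sum_scaleR_vec_lambda: "(\<Sum>j\<in>A. c j *\<^sub>R (\<chi> k. F j k)) = (\<chi> k. \<Sum>j\<in>A. c j * F j k)"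
  by (simp add: vec_eq_iff sum_component)

lemma fst_adapted: "fst (adapted Gam q h v) = h"
  unfolding adapted_def Eh_def Ev_def by (simp add: fst_sum sum_axis_nth)

lemma snd_adapted: "snd (adapted Gam q h v) = v + (\<chi> k. \<Sum>j\<in>UNIV. h $ j * (\<Sum>a\<in>UNIV. snd q $ a * Gam a k j (fst q)))"
proof -
  have 1: "snd (\<Sum>j\<in>UNIV. h $ j *\<^sub>R Eh Gam j q) = (\<chi> k. \<Sum>j\<in>UNIV. h $ j * (\<Sum>a\<in>UNIV. snd q $ a * Gam a k j (fst q)))"
    unfolding Eh_def by (simp only: snd_sum snd_scaleR snd_conv) (rule sum_scaleR_vec_lambda)
  have 2: "snd (\<Sum>j\<in>UNIV. v $ j *\<^sub>R Ev j q) = v"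
    unfolding Ev_def by (simp only: snd_sum snd_scaleR snd_conv sum_axis_nth)
  show ?thesis unfolding adapted_def snd_add 1 2 by (rule add.commute)
qed

lemma adapted_eq: "adapted Gam q h v = (h, v + (\<chi> k. \<Sum>j\<in>UNIV. h $ j * (\<Sum>a\<in>UNIV. snd q $ a * Gam a k j (fst q))))"
  by (rule prod_eqI) (simp_all only: fst_adapted snd_adapted fst_conv snd_conv)

lemma vert_coord_adapted: "vert_coord Gam q (adapted Gam q h v) j = v $ j"
  unfolding vert_coord_def fst_adapted snd_adapted
  by (simp add: sum_distrib_left algebra_simps) (subst sum.swap, simp add: algebra_simps)

definition vert_coords :: "('n::finite \<Rightarrow> 'n \<Rightarrow> 'n \<Rightarrow> real^'n \<Rightarrow> real) \<Rightarrow> (real^'n) \<times> (real^'n) \<Rightarrow> (real^'n) \<times> (real^'n) \<Rightarrow> real^'n" where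
  "vert_coords Gam q y = (\<chi> j. vert_coord Gam q y j)"

lemma vert_coords_adapted: "vert_coords Gam q (adapted Gam q h v) = v"
  unfolding vert_coords_def vert_coord_adapted by simp

lemma adapted_vert_coords: "adapted Gam q (fst y) (vert_coords Gam q y) = y"
  unfolding adapted_eq vert_coords_def vert_coord_def
  by (simp add: vec_eq_iff prod_eq_iff sum_distrib_left algebra_simps) (subst sum.swap, simp add: algebra_simps)

lemma adapted_diff: "adapted Gam q (h1 - h2) (v1 - v2) = adapted Gam q h1 v1 - adapted Gam q h2 v2"
  unfolding adapted_eq by (simp add: vec_eq_iff algebra_simps sum_subtractf)

lemma adapted_zero: "adapted Gam q 0 0 = 0"
  unfolding adapted_eq by (simp add: vec_eq_iff zero_prod_def)

lemma adapted_eq_zero_iff: "adapted Gam q h v = 0 \<longleftrightarrow> h = 0 \<and> v = 0"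
  unfolding adapted_eq by (auto simp: vec_eq_iff zero_prod_def)

lemma has_derivative_fst_comp:
  assumes "(f has_derivative f') (at (fst q))"
  shows "((\<lambda>q. f (fst q)) has_derivative (\<lambda>w. f' (fst w))) (at q)"
proof -
  have "(fst has_derivative fst) (at q)"
    by (rule bounded_linear_imp_has_derivative[OF bounded_linear_fst])
  from diff_chain_at[OF this assms] show ?thesis by (simp add: o_def)
qed

lemma has_derivative_vec_nth:
  assumes "(F has_derivative F') (at q)"
  shows "((\<lambda>q. F q $ j) has_derivative (\<lambda>w. F' w $ j)) (at q)"
  using bounded_linear.has_derivative[OF bounded_linear_vec_nth assms] .

lemma fd_vec_nth:
  assumes "(F has_derivative F') (at q)"
  shows "fd (\<lambda>q. F q $ j) q = (\<lambda>w. F' w $ j)"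
  by (rule frechet_derivative_at[symmetric, OF has_derivative_vec_nth[OF assms]])

definition adapted_field :: "('n::finite \<Rightarrow> 'n \<Rightarrow> 'n \<Rightarrow> real^'n \<Rightarrow> real) \<Rightarrow> (real^'n \<Rightarrow> real^'n) \<Rightarrow> (real^'n \<Rightarrow> real^'n) \<Rightarrow> (real^'n) \<times> (real^'n) \<Rightarrow> (real^'n) \<times> (real^'n)" where
  "adapted_field Gam f g = (\<lambda>q. adapted Gam q (f (fst q)) (g (fst q)))"

definition chris_dual :: "('n::finite \<Rightarrow> 'n \<Rightarrow> 'n \<Rightarrow> real^'n \<Rightarrow> real) \<Rightarrow> real^'n \<Rightarrow> real^'n \<Rightarrow> real^'n \<Rightarrow> real^'n" where
  "chris_dual Gam x a v = (\<chi> h. \<Sum>i\<in>UNIV. \<Sum>j\<in>UNIV. a $ i * v $ j * Gam j i h x)"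

definition cov_c_sym :: "('n::finite \<Rightarrow> 'n \<Rightarrow> 'n \<Rightarrow> real^'n \<Rightarrow> real) \<Rightarrow> ('n \<Rightarrow> 'n \<Rightarrow> real^'n \<Rightarrow> real) \<Rightarrow> 'n \<Rightarrow> 'n \<Rightarrow> 'n \<Rightarrow> real^'n \<Rightarrow> real" where
  "cov_c_sym Gam c i j h x = (cov_c Gam c i j h x + cov_c Gam c j i h x - cov_c Gam c h i j x) / 2"

definition cov_c_sym_form :: "('n::finite \<Rightarrow> 'n \<Rightarrow> 'n \<Rightarrow> real^'n \<Rightarrow> real) \<Rightarrow> ('n \<Rightarrow> 'n \<Rightarrow> real^'n \<Rightarrow> real) \<Rightarrow> real^'n \<Rightarrow> real^'n \<Rightarrow> real^'n \<Rightarrow> real^'n" where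
  "cov_c_sym_form Gam c x a b = (\<chi> h. \<Sum>i\<in>UNIV. \<Sum>j\<in>UNIV. a $ i * b $ j * cov_c_sym Gam c i j h x)"

lemma hcomp_adapted_field: "hcomp (adapted_field Gam f g) j = (\<lambda>q. f (fst q) $ j)"
  unfolding hcomp_def adapted_field_def fst_adapted ..

lemma vcomp_adapted_field: "vcomp Gam (adapted_field Gam f g) j = (\<lambda>q. g (fst q) $ j)"
  unfolding vcomp_eq_vert_coord adapted_field_def vert_coord_adapted ..

lemma sum_sum_scaleR_sum_swap:
  "(\<Sum>i\<in>A. \<Sum>j\<in>B. c i j *\<^sub>R (\<Sum>h\<in>C. d i j h *\<^sub>R (E h::'a::real_vector)))
    = (\<Sum>h\<in>C. (\<Sum>i\<in>A. \<Sum>j\<in>B. c i j * d i j h) *\<^sub>R E h)"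
proof -
  have "(\<Sum>i\<in>A. \<Sum>j\<in>B. c i j *\<^sub>R (\<Sum>h\<in>C. d i j h *\<^sub>R E h)) = (\<Sum>i\<in>A. \<Sum>j\<in>B. \<Sum>h\<in>C. (c i j * d i j h) *\<^sub>R E h)"
    by (simp add: scaleR_sum_right)
  also have "\<dots> = (\<Sum>i\<in>A. \<Sum>h\<in>C. \<Sum>j\<in>B. (c i j * d i j h) *\<^sub>R E h)"
    by (rule sum.cong[OF refl], rule sum.swap)
  also have "\<dots> = (\<Sum>h\<in>C. \<Sum>i\<in>A. \<Sum>j\<in>B. (c i j * d i j h) *\<^sub>R E h)"
    by (rule sum.swap)
  also have "\<dots> = (\<Sum>h\<in>C. (\<Sum>i\<in>A. \<Sum>j\<in>B. c i j * d i j h) *\<^sub>R E h)"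
    by (simp add: scaleR_sum_left)
  finally show ?thesis .
qed

lemma cot_conn_adapted_field:
  assumes f: "(f has_derivative f') (at (fst q))" and g: "(g has_derivative g') (at (fst q))"
  shows "cot_conn Gam c X (adapted_field Gam f g) q =
    adapted Gam q (f' (fst (X q)) + chris Gam (fst q) (fst (X q)) (f (fst q)))
              (g' (fst (X q)) - chris_dual Gam (fst q) (fst (X q)) (g (fst q)) + cov_c_sym_form Gam c (fst q) (fst (X q)) (f (fst q)))"
proof -
  have df: "\<And>j. fd (hcomp (adapted_field Gam f g) j) q = (\<lambda>w. f' (fst w) $ j)"
    unfolding hcomp_adapted_field by (rule fd_vec_nth[OF has_derivative_fst_comp[OF f]])
  have dg: "\<And>j. fd (vcomp Gam (adapted_field Gam f g) j) q = (\<lambda>w. g' (fst w) $ j)"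
    unfolding vcomp_adapted_field by (rule fd_vec_nth[OF has_derivative_fst_comp[OF g]])
  let ?w = "fst (X q)" and ?x = "fst q"
  have hX: "\<And>i. hcomp X i q = ?w $ i" unfolding hcomp_def ..
  have hY: "\<And>j. hcomp (adapted_field Gam f g) j q = f ?x $ j" unfolding hcomp_adapted_field ..
  have vY: "\<And>j. vcomp Gam (adapted_field Gam f g) j q = g ?x $ j" unfolding vcomp_adapted_field ..
  have T3: "(\<Sum>i\<in>UNIV. \<Sum>j\<in>UNIV. (?w $ i * g ?x $ j) *\<^sub>R (\<Sum>h\<in>UNIV. (- Gam j i h ?x) *\<^sub>R Ev h q))
      = (\<Sum>h\<in>UNIV. (- chris_dual Gam ?x ?w (g ?x)) $ h *\<^sub>R Ev h q)"
    unfolding sum_sum_scaleR_sum_swap chris_dual_def by (simp add: sum_negf)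
  have T4: "(\<Sum>i\<in>UNIV. \<Sum>j\<in>UNIV. (?w $ i * f ?x $ j) *\<^sub>R
          ((\<Sum>h\<in>UNIV. Gam h i j ?x *\<^sub>R Eh Gam h q)
         + (\<Sum>h\<in>UNIV. ((cov_c Gam c i j h ?x + cov_c Gam c j i h ?x - cov_c Gam c h i j ?x) / 2) *\<^sub>R Ev h q)))
      = (\<Sum>h\<in>UNIV. chris Gam ?x ?w (f ?x) $ h *\<^sub>R Eh Gam h q) + (\<Sum>h\<in>UNIV. cov_c_sym_form Gam c ?x ?w (f ?x) $ h *\<^sub>R Ev h q)"
    unfolding scaleR_add_right sum.distrib sum_sum_scaleR_sum_swap chris_def cov_c_sym_form_def cov_c_sym_def by simp
  show ?thesis
    unfolding cot_conn_def df dg hX hY vY T3 T4 adapted_def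
    by (simp add: scaleR_add_left scaleR_diff_left sum.distrib sum_subtractf sum_negf algebra_simps)
qed

lemma cinf_on_snd_nth:
  assumes S: "open S"
  shows "cinf_on S (\<lambda>q::(real^'n::finite) \<times> (real^'n). snd q $ a)"
proof -
  have "linear (\<lambda>q::(real^'n) \<times> (real^'n). snd q $ a)"
    using bounded_linear_compose[OF bounded_linear_vec_nth bounded_linear_snd, of a]
    by (rule bounded_linear.linear)
  then show ?thesis by (rule cinf_on_linear[OF S])
qed

lemma cinf_on_fst_comp:
  assumes U: "open U" and g: "cinf_on U g"
  shows "cinf_on (U \<times> UNIV) (\<lambda>q. g (fst q))"
  by (rule cinf_on_comp_linear[OF U open_Times[OF U open_UNIV] g]) (auto simp: linear_fst)

lemma Eh_eq: "Eh Gam j q = (axis j 1, 0) + (\<Sum>h\<in>UNIV. (\<Sum>a\<in>UNIV. snd q $ a * Gam a h j (fst q)) *\<^sub>R (0, axis h 1))"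
  unfolding Eh_def
  by (simp add: prod_eq_iff fst_sum snd_sum) (subst vec_lambda_eq_sum_axis, simp)

lemma cinf_on_Eh:
  assumes U: "open U" and G: "\<And>h i j. cinf_on U (Gam h i j)"
  shows "cinf_on (U \<times> UNIV) (Eh Gam j)"
proof -
  have T: "open (U \<times> (UNIV::(real^'a) set))" by (rule open_Times[OF U open_UNIV])
  have "cinf_on (U \<times> UNIV) (\<lambda>q. (axis j 1, 0) + (\<Sum>h\<in>UNIV. (\<Sum>a\<in>UNIV. snd q $ a * Gam a h j (fst q)) *\<^sub>R (0, axis h (1::real))))"
    by (intro cinf_on_add cinf_on_const cinf_on_sum cinf_on_scaleR cinf_on_mult cinf_on_snd_nth cinf_on_fst_comp T U G)
  then show ?thesis by (simp add: Eh_eq[abs_def])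
qed

lemma cinf_on_adapted_field:
  assumes U: "open U" and G: "\<And>h i j. cinf_on U (Gam h i j)" and f: "cinf_on U f" and g: "cinf_on U g"
  shows "cinf_on (U \<times> UNIV) (adapted_field Gam f g)"
proof -
  have T: "open (U \<times> (UNIV::(real^'a) set))" by (rule open_Times[OF U open_UNIV])
  have fj: "\<And>j. cinf_on U (\<lambda>x. f x $ j)" "\<And>j. cinf_on U (\<lambda>x. g x $ j)"
    using cinf_on_inner_left[OF U f] cinf_on_inner_left[OF U g] by (simp_all add: inner_axis[where y=1, symmetric] cart_eq_inner_axis)
  show ?thesis
    unfolding adapted_field_def adapted_def Ev_def
    by (intro cinf_on_add cinf_on_sum cinf_on_scaleR cinf_on_fst_comp cinf_on_Eh cinf_on_const T U G fj)
qed

lemma cinf_on_pd: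
  assumes U: "open U" and f: "cinf_on U f"
  shows "cinf_on U (pd i f)"
  unfolding pd_def[abs_def] by (rule cinf_on_fd[OF f])

lemma cinf_on_cov_c:
  assumes U: "open U" and G: "\<And>h i j. cinf_on U (Gam h i j)" and C: "\<And>i j. cinf_on U (c i j)"
  shows "cinf_on U (cov_c Gam c i j k)"
  unfolding cov_c_def[abs_def]
  by (intro cinf_on_diff cinf_on_sum cinf_on_mult cinf_on_pd U G C)

lemma cinf_on_chris_dual:
  assumes U: "open U" and G: "\<And>h i j. cinf_on U (Gam h i j)"
  shows "cinf_on U (\<lambda>x. chris_dual Gam x a b)"
  unfolding chris_dual_def by (intro cinf_on_vec_lambda cinf_on_sum cinf_on_mult cinf_on_const U G)

lemma cinf_on_cov_c_sym_form:
  assumes U: "open U" and G: "\<And>h i j. cinf_on U (Gam h i j)" and C: "\<And>i j. cinf_on U (c i j)"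
  shows "cinf_on U (\<lambda>x. cov_c_sym_form Gam c x a b)"
  unfolding cov_c_sym_form_def cov_c_sym_def
  by (intro cinf_on_vec_lambda cinf_on_sum cinf_on_mult cinf_on_const cinf_on_divide_const cinf_on_add cinf_on_diff cinf_on_cov_c U G C)

definition base_curv_dual :: "('n::finite \<Rightarrow> 'n \<Rightarrow> 'n \<Rightarrow> real^'n \<Rightarrow> real) \<Rightarrow> real^'n \<Rightarrow> real^'n \<Rightarrow> real^'n \<Rightarrow> real^'n \<Rightarrow> real^'n" where
  "base_curv_dual Gam x a b v = - fd (\<lambda>x. chris_dual Gam x b v) x a + chris_dual Gam x a (chris_dual Gam x b v)
     + fd (\<lambda>x. chris_dual Gam x a v) x b - chris_dual Gam x b (chris_dual Gam x a v)"

definition mixed_curv :: "('n::finite \<Rightarrow> 'n \<Rightarrow> 'n \<Rightarrow> real^'n \<Rightarrow> real) \<Rightarrow> ('n \<Rightarrow> 'n \<Rightarrow> real^'n \<Rightarrow> real) \<Rightarrow> real^'n \<Rightarrow> real^'n \<Rightarrow> real^'n \<Rightarrow> real^'n \<Rightarrow> real^'n" where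
  "mixed_curv Gam c x a b d = (fd (\<lambda>x. cov_c_sym_form Gam c x b d) x a - chris_dual Gam x a (cov_c_sym_form Gam c x b d) + cov_c_sym_form Gam c x a (chris Gam x b d))
     - (fd (\<lambda>x. cov_c_sym_form Gam c x a d) x b - chris_dual Gam x b (cov_c_sym_form Gam c x a d) + cov_c_sym_form Gam c x b (chris Gam x a d))"

abbreviation const_adapted :: "('n::finite \<Rightarrow> 'n \<Rightarrow> 'n \<Rightarrow> real^'n \<Rightarrow> real) \<Rightarrow> real^'n \<Rightarrow> real^'n \<Rightarrow> (real^'n) \<times> (real^'n) \<Rightarrow> (real^'n) \<times> (real^'n)" where
  "const_adapted Gam h v \<equiv> adapted_field Gam (\<lambda>_. h) (\<lambda>_. v)"

lemma chris_zero_left: "chris Gam x 0 b = 0"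
  unfolding chris_def by (simp add: vec_eq_iff)

lemma chris_dual_zero_left: "chris_dual Gam x 0 b = 0"
  unfolding chris_dual_def by (simp add: vec_eq_iff)

lemma cov_c_sym_form_zero_left: "cov_c_sym_form Gam c x 0 b = 0"
  unfolding cov_c_sym_form_def by (simp add: vec_eq_iff)

lemma chris_dual_diff_right: "chris_dual Gam x a (u - w) = chris_dual Gam x a u - chris_dual Gam x a w"
  unfolding chris_dual_def by (simp add: vec_eq_iff algebra_simps sum_subtractf)

lemma fst_const_adapted: "fst (const_adapted Gam h v q) = h"
  unfolding adapted_field_def fst_adapted ..

lemma cot_conn_const_adapted:
  "cot_conn Gam c (const_adapted Gam h2 v2) (const_adapted Gam h3 v3) = adapted_field Gam (\<lambda>x. chris Gam x h2 h3) (\<lambda>x. cov_c_sym_form Gam c x h2 h3 - chris_dual Gam x h2 v3)"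
proof
  fix q
  show "cot_conn Gam c (const_adapted Gam h2 v2) (const_adapted Gam h3 v3) q = adapted_field Gam (\<lambda>x. chris Gam x h2 h3) (\<lambda>x. cov_c_sym_form Gam c x h2 h3 - chris_dual Gam x h2 v3) q"
    unfolding cot_conn_adapted_field[OF has_derivative_const has_derivative_const] fst_const_adapted
    by (simp add: adapted_field_def)
qed

lemma fst_fd_const_adapted:
  assumes "(const_adapted Gam h v has_derivative F') (at q)"
  shows "fst (F' w) = 0"
proof -
  have "((\<lambda>q. fst (const_adapted Gam h v q)) has_derivative (\<lambda>w. fst (F' w))) (at q)"
    by (rule has_derivative_fst[OF assms])
  then have "((\<lambda>q. h) has_derivative (\<lambda>w. fst (F' w))) (at q)" by (simp add: fst_const_adapted)
  from has_derivative_unique[OF this has_derivative_const] show ?thesis by metis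
qed

lemma curv_cot_conn_const_adapted:
  assumes U: "open U" and G: "\<And>h i j. cinf_on U (Gam h i j)" and C: "\<And>i j. cinf_on U (c i j)"
    and q: "q \<in> U \<times> UNIV"
  shows "curv (cot_conn Gam c) (const_adapted Gam h1 v1) (const_adapted Gam h2 v2) (const_adapted Gam h3 v3) q
     = adapted Gam q (base_curv Gam (fst q) h1 h2 h3) (base_curv_dual Gam (fst q) h1 h2 v3 + mixed_curv Gam c (fst q) h1 h2 h3)"
proof -
  let ?x = "fst q"
  have T: "open (U \<times> (UNIV::(real^'a) set))" by (rule open_Times[OF U open_UNIV])
  have x: "?x \<in> U" using q by auto
  have cF: "\<And>h v. cinf_on (U \<times> UNIV) (const_adapted Gam h v)" by (intro cinf_on_adapted_field U G cinf_on_const)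
  have dB: "\<And>a b. ((\<lambda>x. chris Gam x a b) has_derivative fd (\<lambda>x. chris Gam x a b) ?x) (at ?x)"
    by (rule cinf_on_has_derivative[OF U cinf_on_chris[OF U G] x])
  have dG: "\<And>a b. ((\<lambda>x. chris_dual Gam x a b) has_derivative fd (\<lambda>x. chris_dual Gam x a b) ?x) (at ?x)"
    by (rule cinf_on_has_derivative[OF U cinf_on_chris_dual[OF U G] x])
  have dA: "\<And>a b. ((\<lambda>x. cov_c_sym_form Gam c x a b) has_derivative fd (\<lambda>x. cov_c_sym_form Gam c x a b) ?x) (at ?x)"
    by (rule cinf_on_has_derivative[OF U cinf_on_cov_c_sym_form[OF U G C] x])
  have dAG: "\<And>a b v. ((\<lambda>x. cov_c_sym_form Gam c x a b - chris_dual Gam x a v) has_derivative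
      (\<lambda>w. fd (\<lambda>x. cov_c_sym_form Gam c x a b) ?x w - fd (\<lambda>x. chris_dual Gam x a v) ?x w)) (at ?x)"
    by (rule has_derivative_diff[OF dA dG])
  have nested: "\<And>ha va hb vb hc vc. cot_conn Gam c (const_adapted Gam ha va) (cot_conn Gam c (const_adapted Gam hb vb) (const_adapted Gam hc vc)) q
     = adapted Gam q (fd (\<lambda>x. chris Gam x hb hc) ?x ha + chris Gam ?x ha (chris Gam ?x hb hc))
          (fd (\<lambda>x. cov_c_sym_form Gam c x hb hc) ?x ha - fd (\<lambda>x. chris_dual Gam x hb vc) ?x ha
           - chris_dual Gam ?x ha (cov_c_sym_form Gam c ?x hb hc - chris_dual Gam ?x hb vc) + cov_c_sym_form Gam c ?x ha (chris Gam ?x hb hc))"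
    unfolding cot_conn_const_adapted cot_conn_adapted_field[OF dB dAG] fst_const_adapted by simp
  have fst_lie: "fst (lie (const_adapted Gam h1 v1) (const_adapted Gam h2 v2) q) = 0"
    unfolding lie_def using fst_fd_const_adapted[OF cinf_on_has_derivative[OF T cF q]] by simp
  have along_lie: "cot_conn Gam c (lie (const_adapted Gam h1 v1) (const_adapted Gam h2 v2)) (const_adapted Gam h3 v3) q = 0"
    unfolding cot_conn_adapted_field[OF has_derivative_const has_derivative_const] fst_lie
    by (simp add: chris_zero_left chris_dual_zero_left cov_c_sym_form_zero_left adapted_zero)
  show ?thesis
    unfolding curv_def nested along_lie
    by (simp add: adapted_diff[symmetric] base_curv_def base_curv_dual_def mixed_curv_def chris_dual_diff_right algebra_simps)
qed

definition vert_coord_corr :: "('n::finite \<Rightarrow> 'n \<Rightarrow> 'n \<Rightarrow> real^'n \<Rightarrow> real) \<Rightarrow> (real^'n) \<times> (real^'n) \<Rightarrow> (real^'n) \<times> (real^'n) \<Rightarrow> (real^'n) \<times> (real^'n) \<Rightarrow> 'n \<Rightarrow> real" where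
  "vert_coord_corr Gam q w y j = (\<Sum>a\<in>UNIV. \<Sum>h\<in>UNIV. snd w $ a * Gam a j h (fst q) * fst y $ h
      + snd q $ a * fd (Gam a j h) (fst q) (fst w) * fst y $ h)"

text \<open>The Christoffel form of \<open>cot_conn\<close>; the term \<open>vert_coord_corr\<close> comes from the dependence of
  the adapted frame on the base point.\<close>

definition cot_cform :: "('n::finite \<Rightarrow> 'n \<Rightarrow> 'n \<Rightarrow> real^'n \<Rightarrow> real) \<Rightarrow> ('n \<Rightarrow> 'n \<Rightarrow> real^'n \<Rightarrow> real)
    \<Rightarrow> (real^'n) \<times> (real^'n) \<Rightarrow> (real^'n) \<times> (real^'n) \<Rightarrow> (real^'n) \<times> (real^'n) \<Rightarrow> (real^'n) \<times> (real^'n)" where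
  "cot_cform Gam c q w y = - (\<Sum>j\<in>UNIV. vert_coord_corr Gam q w y j *\<^sub>R Ev j q)
    + (\<Sum>i\<in>UNIV. \<Sum>j\<in>UNIV. (fst w $ i * vert_coord Gam q y j) *\<^sub>R
          (\<Sum>h\<in>UNIV. (- Gam j i h (fst q)) *\<^sub>R Ev h q))
    + (\<Sum>i\<in>UNIV. \<Sum>j\<in>UNIV. (fst w $ i * fst y $ j) *\<^sub>R
          ((\<Sum>h\<in>UNIV. Gam h i j (fst q) *\<^sub>R Eh Gam h q)
         + (\<Sum>h\<in>UNIV. ((cov_c Gam c i j h (fst q) + cov_c Gam c j i h (fst q)
                         - cov_c Gam c h i j (fst q)) / 2) *\<^sub>R Ev h q)))"

lemma has_derivative_snd_nth: "((\<lambda>q::(real^'n::finite) \<times> (real^'n). snd q $ a) has_derivative (\<lambda>w. snd w $ a)) F"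
  by (rule bounded_linear_imp_has_derivative[OF bounded_linear_compose[OF bounded_linear_vec_nth bounded_linear_snd, unfolded o_def]])

lemma vcomp_has_derivative:
  assumes Y: "(Y has_derivative Y') (at q)"
    and G: "\<And>a j h. (Gam a j h has_derivative fd (Gam a j h) (fst q)) (at (fst q))"
  shows "(vcomp Gam Y j has_derivative (\<lambda>w. vert_coord Gam q (Y' w) j - vert_coord_corr Gam q w (Y q) j)) (at q)"
proof -
  have Yf: "\<And>h. ((\<lambda>q. fst (Y q) $ h) has_derivative (\<lambda>w. fst (Y' w) $ h)) (at q)"
    by (rule has_derivative_vec_nth[OF has_derivative_fst[OF Y]])
  have Ys: "((\<lambda>q. snd (Y q) $ j) has_derivative (\<lambda>w. snd (Y' w) $ j)) (at q)"
    by (rule has_derivative_vec_nth[OF has_derivative_snd[OF Y]])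
  have Gf: "\<And>a j h. ((\<lambda>q. Gam a j h (fst q)) has_derivative (\<lambda>w. fd (Gam a j h) (fst q) (fst w))) (at q)"
    by (rule has_derivative_fst_comp[OF G])
  have "(vcomp Gam Y j has_derivative (\<lambda>w. snd (Y' w) $ j - (\<Sum>a\<in>UNIV. \<Sum>h\<in>UNIV.
        (snd q $ a * Gam a j h (fst q)) * fst (Y' w) $ h
      + (snd q $ a * fd (Gam a j h) (fst q) (fst w) + snd w $ a * Gam a j h (fst q)) * fst (Y q) $ h))) (at q)"
    unfolding vcomp_def
    by (intro has_derivative_diff Ys has_derivative_sum has_derivative_mult Yf Gf has_derivative_snd_nth)
  moreover have "(\<lambda>w. snd (Y' w) $ j - (\<Sum>a\<in>UNIV. \<Sum>h\<in>UNIV.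
        (snd q $ a * Gam a j h (fst q)) * fst (Y' w) $ h
      + (snd q $ a * fd (Gam a j h) (fst q) (fst w) + snd w $ a * Gam a j h (fst q)) * fst (Y q) $ h))
     = (\<lambda>w. vert_coord Gam q (Y' w) j - vert_coord_corr Gam q w (Y q) j)"
    unfolding vert_coord_def vert_coord_corr_def by (auto simp: algebra_simps sum.distrib sum_subtractf)
  ultimately show ?thesis by simp
qed

lemma cot_conn_eq_cot_cform:
  assumes Y: "(Y has_derivative Y') (at q)"
    and G: "\<And>a j h. (Gam a j h has_derivative fd (Gam a j h) (fst q)) (at (fst q))"
  shows "cot_conn Gam c X Y q = Y' (X q) + cot_cform Gam c q (X q) (Y q)"
proof -
  have dh: "\<And>j. fd (hcomp Y j) q = (\<lambda>w. fst (Y' w) $ j)"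
    unfolding hcomp_def[abs_def] by (rule fd_vec_nth[OF has_derivative_fst[OF Y]])
  have dv: "\<And>j. fd (vcomp Gam Y j) q = (\<lambda>w. vert_coord Gam q (Y' w) j - vert_coord_corr Gam q w (Y q) j)"
    by (rule frechet_derivative_at[symmetric, OF vcomp_has_derivative[OF Y G]])
  have rec: "(\<Sum>j\<in>UNIV. fst (Y' (X q)) $ j *\<^sub>R Eh Gam j q) + (\<Sum>j\<in>UNIV. vert_coord Gam q (Y' (X q)) j *\<^sub>R Ev j q) = Y' (X q)"
    using adapted_vert_coords[of Gam q "Y' (X q)"] unfolding adapted_def vert_coords_def by simp
  have gen: "\<And>A B C T3 T4 (d::'z::ab_group_add). A + B = d \<Longrightarrow> A + (B - C) + T3 + T4 = d + (- C + T3 + T4)"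
    by (simp add: algebra_simps)
  show ?thesis
    unfolding cot_conn_def dh dv cot_cform_def hcomp_def vcomp_eq_vert_coord scaleR_diff_left sum_subtractf
    by (rule gen[OF rec])
qed

lemma vert_coord_add: "vert_coord Gam q (y1 + y2) j = vert_coord Gam q y1 j + vert_coord Gam q y2 j"
  unfolding vert_coord_def by (simp add: algebra_simps sum.distrib)

lemma vert_coord_scaleR: "vert_coord Gam q (r *\<^sub>R y) j = r * vert_coord Gam q y j"
  unfolding vert_coord_def by (simp add: algebra_simps sum_distrib_left)

lemma vert_coord_corr_add_right: "vert_coord_corr Gam q w (y1 + y2) j = vert_coord_corr Gam q w y1 j + vert_coord_corr Gam q w y2 j"
  unfolding vert_coord_corr_def by (simp add: algebra_simps sum.distrib)

lemma vert_coord_corr_scaleR_right: "vert_coord_corr Gam q w (r *\<^sub>R y) j = r * vert_coord_corr Gam q w y j"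
  unfolding vert_coord_corr_def by (simp add: algebra_simps sum_distrib_left)

lemma vert_coord_corr_add_left:
  assumes G: "\<And>a j h. (Gam a j h has_derivative fd (Gam a j h) (fst q)) (at (fst q))"
  shows "vert_coord_corr Gam q (w1 + w2) y j = vert_coord_corr Gam q w1 y j + vert_coord_corr Gam q w2 y j"
proof -
  have l: "\<And>a j h. linear (fd (Gam a j h) (fst q))" by (rule has_derivative_linear[OF G])
  show ?thesis unfolding vert_coord_corr_def by (simp add: linear_add[OF l] algebra_simps sum.distrib)
qed

lemma vert_coord_corr_scaleR_left:
  assumes G: "\<And>a j h. (Gam a j h has_derivative fd (Gam a j h) (fst q)) (at (fst q))"
  shows "vert_coord_corr Gam q (r *\<^sub>R w) y j = r * vert_coord_corr Gam q w y j"
proof -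
  have l: "\<And>a j h. linear (fd (Gam a j h) (fst q))" by (rule has_derivative_linear[OF G])
  show ?thesis unfolding vert_coord_corr_def by (simp add: linear_scale[OF l] algebra_simps sum_distrib_left)
qed

lemma bilinear_cot_cform:
  assumes G: "\<And>a j h. (Gam a j h has_derivative fd (Gam a j h) (fst q)) (at (fst q))"
  shows "bilinear (cot_cform Gam c q)"
  unfolding bilinear_def linear_iff
proof (intro conjI allI)
  fix w y1 y2 :: "(real^'a) \<times> (real^'a)"
  show "cot_cform Gam c q w (y1 + y2) = cot_cform Gam c q w y1 + cot_cform Gam c q w y2"
    unfolding cot_cform_def by (simp add: vert_coord_corr_add_right vert_coord_add distrib_left scaleR_add_left sum.distrib)
next
  fix w y :: "(real^'a) \<times> (real^'a)" and r :: real
  show "cot_cform Gam c q w (r *\<^sub>R y) = r *\<^sub>R cot_cform Gam c q w y"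
    unfolding cot_cform_def by (simp add: vert_coord_corr_scaleR_right vert_coord_scaleR scaleR_sum_right scaleR_add_right scaleR_diff_right scaleR_scaleR mult_ac)
next
  fix y w1 w2 :: "(real^'a) \<times> (real^'a)"
  show "cot_cform Gam c q (w1 + w2) y = cot_cform Gam c q w1 y + cot_cform Gam c q w2 y"
    unfolding cot_cform_def by (simp add: vert_coord_corr_add_left[OF G] distrib_right scaleR_add_left sum.distrib)
next
  fix y w :: "(real^'a) \<times> (real^'a)" and r :: real
  show "cot_cform Gam c q (r *\<^sub>R w) y = r *\<^sub>R cot_cform Gam c q w y"
    unfolding cot_cform_def by (simp add: vert_coord_corr_scaleR_left[OF G] scaleR_sum_right scaleR_add_right scaleR_diff_right scaleR_scaleR mult_ac)
qed

lemma cinf_on_cot_cform: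
  assumes U: "open U" and G: "\<And>h i j. cinf_on U (Gam h i j)" and C: "\<And>i j. cinf_on U (c i j)"
  shows "cinf_on (U \<times> UNIV) (\<lambda>q. cot_cform Gam c q a b)"
proof -
  have T: "open (U \<times> (UNIV::(real^'a) set))" by (rule open_Times[OF U open_UNIV])
  show ?thesis
    unfolding cot_cform_def vert_coord_corr_def vert_coord_def Ev_def
    by (intro cinf_on_add cinf_on_diff cinf_on_uminus cinf_on_sum cinf_on_scaleR cinf_on_mult cinf_on_const cinf_on_divide_const
        cinf_on_snd_nth cinf_on_Eh cinf_on_fst_comp cinf_on_fd cinf_on_cov_c T U G C)
qed

lemma cot_conn_has_cform:
  assumes U: "open U" and G: "\<And>h i j. cinf_on U (Gam h i j)"
  shows "has_cform (cot_conn Gam c) (\<lambda>a b q. cot_cform Gam c q a b) (U \<times> UNIV)"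
  unfolding has_cform_def
proof (intro allI impI ballI)
  fix X Y :: "(real^'a) \<times> (real^'a) \<Rightarrow> (real^'a) \<times> (real^'a)" and q :: "(real^'a) \<times> (real^'a)"
  assume X: "cinf_on (U \<times> UNIV) X" and Y: "cinf_on (U \<times> UNIV) Y" and q: "q \<in> U \<times> UNIV"
  have T: "open (U \<times> (UNIV::(real^'a) set))" by (rule open_Times[OF U open_UNIV])
  have x: "fst q \<in> U" using q by auto
  have Gd: "\<And>a j h. (Gam a j h has_derivative fd (Gam a j h) (fst q)) (at (fst q))"
    by (rule cinf_on_has_derivative[OF U G x])
  show "cot_conn Gam c X Y q = cform_conn (\<lambda>a b q. cot_cform Gam c q a b) X Y q"
    unfolding cot_conn_eq_cot_cform[OF cinf_on_has_derivative[OF T Y q] Gd] cform_conn_def cform_bilinear[of "cot_cform Gam c", OF bilinear_cot_cform[of Gam q c, OF Gd]] ..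
qed

lemma cform_curv_cot_adapted:
  assumes U: "open U" and G: "\<And>h i j. cinf_on U (Gam h i j)" and C: "\<And>i j. cinf_on U (c i j)"
    and q: "q \<in> U \<times> UNIV"
  shows "cform_curv (\<lambda>a b q. cot_cform Gam c q a b) q (adapted Gam q h1 v1) (adapted Gam q h2 v2) (adapted Gam q h3 v3)
     = adapted Gam q (base_curv Gam (fst q) h1 h2 h3) (base_curv_dual Gam (fst q) h1 h2 v3 + mixed_curv Gam c (fst q) h1 h2 h3)"
proof -
  have T: "open (U \<times> (UNIV::(real^'a) set))" by (rule open_Times[OF U open_UNIV])
  have cF: "\<And>h v. cinf_on (U \<times> UNIV) (const_adapted Gam h v)" by (intro cinf_on_adapted_field U G cinf_on_const)
  have "curv (cot_conn Gam c) (const_adapted Gam h1 v1) (const_adapted Gam h2 v2) (const_adapted Gam h3 v3) q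
     = cform_curv (\<lambda>a b q. cot_cform Gam c q a b) q (adapted Gam q h1 v1) (adapted Gam q h2 v2) (adapted Gam q h3 v3)"
    using curv_eq_cform_curv[OF T cinf_on_cot_cform[OF U G C] cot_conn_has_cform[OF U G] cF cF cF q] by (simp add: adapted_field_def)
  then show ?thesis using curv_cot_conn_const_adapted[OF U G C q] by simp
qed

lemma chris_dual_adjoint: "chris_dual Gam x a v \<bullet> u = v \<bullet> chris Gam x a u"
proof -
  have "chris_dual Gam x a v \<bullet> u = (\<Sum>h\<in>UNIV. \<Sum>i\<in>UNIV. \<Sum>j\<in>UNIV. a $ i * v $ j * Gam j i h x * u $ h)"
    unfolding inner_vec_def chris_dual_def by (simp add: sum_distrib_right)
  also have "\<dots> = (\<Sum>i\<in>UNIV. \<Sum>h\<in>UNIV. \<Sum>j\<in>UNIV. a $ i * v $ j * Gam j i h x * u $ h)"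
    by (rule sum.swap)
  also have "\<dots> = (\<Sum>i\<in>UNIV. \<Sum>j\<in>UNIV. \<Sum>h\<in>UNIV. a $ i * v $ j * Gam j i h x * u $ h)"
    by (rule sum.cong[OF refl], rule sum.swap)
  also have "\<dots> = (\<Sum>j\<in>UNIV. \<Sum>i\<in>UNIV. \<Sum>h\<in>UNIV. a $ i * v $ j * Gam j i h x * u $ h)"
    by (rule sum.swap)
  also have "\<dots> = v \<bullet> chris Gam x a u"
    unfolding inner_vec_def chris_def by (simp add: sum_distrib_left mult_ac)
  finally show ?thesis .
qed

lemma base_curv_dual_adjoint:
  assumes U: "open U" and G: "\<And>h i j. cinf_on U (Gam h i j)" and x: "x \<in> U"
  shows "base_curv_dual Gam x a b v \<bullet> u = - (v \<bullet> base_curv Gam x a b u)"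
proof -
  have dGs: "\<And>a b w. fd (\<lambda>x. chris_dual Gam x b v) x a \<bullet> u = v \<bullet> fd (\<lambda>x. chris Gam x b u) x a"
  proof -
    fix a b w
    have e1: "fd (\<lambda>x. chris_dual Gam x b v \<bullet> u) x = (\<lambda>w. fd (\<lambda>x. chris_dual Gam x b v) x w \<bullet> u)"
      by (rule fd_inner_left[OF cinf_on_has_derivative[OF U cinf_on_chris_dual[where a=b and b=v, OF U G] x]])
    have e2: "fd (\<lambda>x. chris Gam x b u \<bullet> v) x = (\<lambda>w. fd (\<lambda>x. chris Gam x b u) x w \<bullet> v)"
      by (rule fd_inner_left[OF cinf_on_has_derivative[OF U cinf_on_chris[where a=b and b=u, OF U G] x]])
    have "fd (\<lambda>x. chris_dual Gam x b v) x a \<bullet> u = fd (\<lambda>x. chris_dual Gam x b v \<bullet> u) x a"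
      using e1 by simp
    also have "\<dots> = fd (\<lambda>x. chris Gam x b u \<bullet> v) x a"
      by (rule arg_cong[where f="\<lambda>f. fd f x a"], rule ext, subst chris_dual_adjoint, rule inner_commute)
    also have "\<dots> = fd (\<lambda>x. chris Gam x b u) x a \<bullet> v"
      using e2 by simp
    finally show "fd (\<lambda>x. chris_dual Gam x b v) x a \<bullet> u = v \<bullet> fd (\<lambda>x. chris Gam x b u) x a"
      by (simp add: inner_commute)
  qed
  have g2: "chris_dual Gam x a (chris_dual Gam x b v) \<bullet> u = v \<bullet> chris Gam x b (chris Gam x a u)"
    by (simp add: chris_dual_adjoint)
  have g3: "chris_dual Gam x b (chris_dual Gam x a v) \<bullet> u = v \<bullet> chris Gam x a (chris Gam x b u)"
    by (simp add: chris_dual_adjoint)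
  show ?thesis
    unfolding base_curv_dual_def base_curv_def
    by (simp add: inner_add_left inner_diff_left inner_add_right inner_diff_right dGs g2 g3 del: inner_minus_left)
qed

section \<open>The mixed curvature term\<close>

lemma sum_mult_sum_swap:
  fixes a b :: "'n \<Rightarrow> real"
  shows "(\<Sum>m\<in>A. a m * (\<Sum>n\<in>A. b n * c m n)) = (\<Sum>m\<in>A. b m * (\<Sum>n\<in>A. a n * c n m))"
  by (simp add: sum_distrib_left mult_ac) (subst sum.swap, simp add: mult_ac)

lemma sum_mult_sum_assoc:
  fixes a :: "'n \<Rightarrow> real"
  shows "(\<Sum>m\<in>A. a m * (\<Sum>n\<in>A. B n m * c n)) = (\<Sum>m\<in>A. (\<Sum>n\<in>A. B m n * a n) * c m)"
  by (simp add: sum_distrib_left sum_distrib_right mult_ac) (subst sum.swap, simp add: mult_ac)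

text \<open>Identities between the values at one point of \<open>\<Gamma>\<^sup>m\<^sub>i\<^sub>j\<close>, \<open>\<partial>\<^sub>l\<Gamma>\<^sup>m\<^sub>i\<^sub>j\<close>, \<open>c\<^sub>j\<^sub>h\<close>, \<open>\<partial>\<^sub>lc\<^sub>j\<^sub>h\<close>, \<open>\<partial>\<^sub>l\<partial>\<^sub>ic\<^sub>j\<^sub>h\<close>
  (the parameters \<open>G\<close>, \<open>dG\<close>, \<open>cc\<close>, \<open>dc\<close>, \<open>ddc\<close>). Then \<open>jcov\<close>, \<open>jcov2\<close>, \<open>jcurv\<close> are \<open>\<nabla>c\<close>, \<open>\<nabla>\<nabla>c\<close>,
  \<open>R\<close> at that point, and \<open>jmixed\<close> is the coefficient of \<open>mixed_curv\<close>.\<close>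

context
  fixes G :: "'n::finite \<Rightarrow> 'n \<Rightarrow> 'n \<Rightarrow> real"
    and dG :: "'n \<Rightarrow> 'n \<Rightarrow> 'n \<Rightarrow> 'n \<Rightarrow> real"
    and cc :: "'n \<Rightarrow> 'n \<Rightarrow> real"
    and dc :: "'n \<Rightarrow> 'n \<Rightarrow> 'n \<Rightarrow> real"
    and ddc :: "'n \<Rightarrow> 'n \<Rightarrow> 'n \<Rightarrow> 'n \<Rightarrow> real"
begin

definition "jcov i j h = dc i j h - (\<Sum>m\<in>UNIV. G m i j * cc m h) - (\<Sum>m\<in>UNIV. G m i h * cc j m)"

definition "jdcov l i j h = ddc l i j h - (\<Sum>m\<in>UNIV. dG l m i j * cc m h + G m i j * dc l m h)
   - (\<Sum>m\<in>UNIV. dG l m i h * cc j m + G m i h * dc l j m)"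

definition "jcov2 l i j h = jdcov l i j h - (\<Sum>m\<in>UNIV. G m l i * jcov m j h)
   - (\<Sum>m\<in>UNIV. G m l j * jcov i m h) - (\<Sum>m\<in>UNIV. G m l h * jcov i j m)"

definition "jsym i j h = (jcov i j h + jcov j i h - jcov h i j) / 2"

definition "jdsym l i j h = (jdcov l i j h + jdcov l j i h - jdcov l h i j) / 2"

definition "jmixed l i j h = jdsym l i j h - (\<Sum>m\<in>UNIV. jsym i j m * G m l h) + (\<Sum>m\<in>UNIV. G m i j * jsym l m h)
   - (jdsym i l j h - (\<Sum>m\<in>UNIV. jsym l j m * G m i h) + (\<Sum>m\<in>UNIV. G m l j * jsym i m h))"

definition "jcurv l i j m = dG l m i j - dG i m l j + (\<Sum>n\<in>UNIV. G m l n * G n i j) - (\<Sum>n\<in>UNIV. G m i n * G n l j)"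

lemma sum_jsym_mult:
  "2 * (\<Sum>m\<in>UNIV. jsym i j m * F m)
     = (\<Sum>m\<in>UNIV. F m * jcov i j m) + (\<Sum>m\<in>UNIV. F m * jcov j i m) - (\<Sum>m\<in>UNIV. F m * jcov m i j)"
proof -
  have "2 * (\<Sum>m\<in>UNIV. jsym i j m * F m) = (\<Sum>m\<in>UNIV. F m * jcov i j m + F m * jcov j i m - F m * jcov m i j)"
    unfolding sum_distrib_left by (rule sum.cong) (simp_all add: jsym_def field_simps)
  then show ?thesis by (simp add: sum.distrib sum_subtractf)
qed

lemma sum_mult_jsym:
  "2 * (\<Sum>m\<in>UNIV. F m * jsym i m h)
     = (\<Sum>m\<in>UNIV. F m * jcov i m h) + (\<Sum>m\<in>UNIV. F m * jcov m i h) - (\<Sum>m\<in>UNIV. F m * jcov h i m)"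
proof -
  have "2 * (\<Sum>m\<in>UNIV. F m * jsym i m h) = (\<Sum>m\<in>UNIV. F m * jcov i m h + F m * jcov m i h - F m * jcov h i m)"
    unfolding sum_distrib_left by (rule sum.cong) (simp_all add: jsym_def field_simps)
  then show ?thesis by (simp add: sum.distrib sum_subtractf)
qed

lemma jdsym_double: "2 * jdsym l i j h = jdcov l i j h + jdcov l j i h - jdcov l h i j"
  unfolding jdsym_def by simp

lemma jmixed_double:
  assumes tor: "\<And>m i j. G m i j = G m j i"
  shows "2 * jmixed l i j h = (jcov2 l i j h + jcov2 l j i h - jcov2 l h i j) - (jcov2 i l j h + jcov2 i j l h - jcov2 i h l j)"
proof -
  have "2 * jmixed l i j h = 2 * jdsym l i j h - 2 * (\<Sum>m\<in>UNIV. jsym i j m * G m l h)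
      + 2 * (\<Sum>m\<in>UNIV. G m i j * jsym l m h) - (2 * jdsym i l j h
      - 2 * (\<Sum>m\<in>UNIV. jsym l j m * G m i h) + 2 * (\<Sum>m\<in>UNIV. G m l j * jsym i m h))"
    unfolding jmixed_def by (simp add: algebra_simps)
  also have "\<dots> = (jcov2 l i j h + jcov2 l j i h - jcov2 l h i j) - (jcov2 i l j h + jcov2 i j l h - jcov2 i h l j)"
    unfolding sum_jsym_mult sum_mult_jsym jcov2_def jdsym_double by (simp add: tor[of _ i l] algebra_simps)
  finally show ?thesis .
qed

lemma sum_mult_jcov_middle:
  "(\<Sum>m\<in>UNIV. F m * jcov i m h) = (\<Sum>m\<in>UNIV. F m * dc i m h)
     - (\<Sum>m\<in>UNIV. F m * (\<Sum>n\<in>UNIV. G n i m * cc n h)) - (\<Sum>m\<in>UNIV. F m * (\<Sum>n\<in>UNIV. G n i h * cc m n))"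
  unfolding jcov_def by (simp add: algebra_simps sum.distrib sum_subtractf)

lemma sum_mult_jcov_last:
  "(\<Sum>m\<in>UNIV. F m * jcov i j m) = (\<Sum>m\<in>UNIV. F m * dc i j m)
     - (\<Sum>m\<in>UNIV. F m * (\<Sum>n\<in>UNIV. G n i j * cc n m)) - (\<Sum>m\<in>UNIV. F m * (\<Sum>n\<in>UNIV. G n i m * cc j n))"
  unfolding jcov_def by (simp add: algebra_simps sum.distrib sum_subtractf)

lemma sum_jcurv_mult:
  "(\<Sum>m\<in>UNIV. jcurv l i j m * f m) = (\<Sum>m\<in>UNIV. dG l m i j * f m) - (\<Sum>m\<in>UNIV. dG i m l j * f m)
     + (\<Sum>m\<in>UNIV. (\<Sum>n\<in>UNIV. G m l n * G n i j) * f m) - (\<Sum>m\<in>UNIV. (\<Sum>n\<in>UNIV. G m i n * G n l j) * f m)"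
  unfolding jcurv_def by (simp only: left_diff_distrib distrib_right sum.distrib sum_subtractf)

lemma jcov2_ricci_identity:
  assumes tor: "\<And>m i j. G m i j = G m j i"
    and sym: "ddc l i j h = ddc i l j h"
  shows "jcov2 l i j h - jcov2 i l j h = - (\<Sum>m\<in>UNIV. jcurv l i j m * cc m h) - (\<Sum>m\<in>UNIV. jcurv l i h m * cc j m)"
proof -
  have "jcov2 l i j h - jcov2 i l j h = (jdcov l i j h - jdcov i l j h)
      - (\<Sum>m\<in>UNIV. G m l j * jcov i m h) - (\<Sum>m\<in>UNIV. G m l h * jcov i j m)
      + (\<Sum>m\<in>UNIV. G m i j * jcov l m h) + (\<Sum>m\<in>UNIV. G m i h * jcov l j m)"
    unfolding jcov2_def by (simp add: tor[of _ i l])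
  also have "\<dots> = - (\<Sum>m\<in>UNIV. jcurv l i j m * cc m h) - (\<Sum>m\<in>UNIV. jcurv l i h m * cc j m)"
    unfolding sum_mult_jcov_middle sum_mult_jcov_last sum_jcurv_mult jdcov_def sum.distrib sym
      sum_mult_sum_swap[where a = "\<lambda>m. G m l j" and b = "\<lambda>n. G n i h"]
      sum_mult_sum_swap[where a = "\<lambda>m. G m i j" and b = "\<lambda>n. G n l h"]
      sum_mult_sum_assoc[where a = "\<lambda>m. G m l j"] sum_mult_sum_assoc[where a = "\<lambda>m. G m i j"]
      sum_mult_sum_assoc[where a = "\<lambda>m. G m l h"] sum_mult_sum_assoc[where a = "\<lambda>m. G m i h"]
    by linarith
  finally show ?thesis .
qed

lemma jmixed_eq_zero:
  assumes tor: "\<And>m i j. G m i j = G m j i"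
    and sym: "ddc l i j h = ddc i l j h"
    and hyp: "(jcov2 l j i h - jcov2 l h i j) - (jcov2 i j l h - jcov2 i h l j)
       - (\<Sum>m\<in>UNIV. jcurv l i j m * cc m h) - (\<Sum>m\<in>UNIV. jcurv l i h m * cc j m) = 0"
  shows "jmixed l i j h = 0"
  using jmixed_double[OF tor, of l i j h] jcov2_ricci_identity[OF tor sym] hyp by linarith

end

lemma if_zero_mult: "(if P then a else 0) * (x::real) = (if P then a * x else 0)"
  by simp

lemma sum_if_zero: "(\<Sum>j\<in>A. if P then f j else (0::'a::comm_monoid_add)) = (if P then \<Sum>j\<in>A. f j else 0)"
  by simp

lemma chris_axis_axis: "chris Gam y (axis i 1) (axis j 1) = (\<chi> m. Gam m i j y)"
  by (simp add: chris_def axis_def vec_eq_iff mult_if_delta if_zero_mult sum_if_zero sum.delta cong: if_cong)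

lemma chris_axis: "chris Gam y (axis i 1) v = (\<chi> m. \<Sum>j\<in>UNIV. v $ j * Gam m i j y)"
  by (simp add: chris_def axis_def vec_eq_iff mult_if_delta if_zero_mult sum_if_zero sum.delta cong: if_cong)

lemma has_derivative_axis_expansion:
  fixes f :: "real^'n::finite \<Rightarrow> real"
  assumes "(f has_derivative f') (at x)"
  shows "f' a = (\<Sum>l\<in>UNIV. a $ l * f' (axis l 1))"
proof -
  have lin: "linear f'" by (rule has_derivative_linear[OF assms])
  have "f' a = f' (\<Sum>l\<in>UNIV. a $ l *\<^sub>R axis l 1)" by (simp add: sum_axis_nth)
  also have "\<dots> = (\<Sum>l\<in>UNIV. a $ l * f' (axis l 1))" by (simp add: linear_sum[OF lin] linear_scale[OF lin])
  finally show ?thesis .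
qed

lemma triple_sum_reorder: "(\<Sum>i\<in>UNIV. \<Sum>j\<in>UNIV. b i * d j * (\<Sum>l\<in>UNIV. a l * F l i j)) =
  (\<Sum>l\<in>UNIV. \<Sum>i\<in>UNIV. \<Sum>j\<in>UNIV. a l * b i * d j * F l i j)" for a b d :: "'n::finite \<Rightarrow> real"
proof -
  have "(\<Sum>i\<in>UNIV. \<Sum>j\<in>UNIV. b i * d j * (\<Sum>l\<in>UNIV. a l * F l i j)) = (\<Sum>i\<in>UNIV. \<Sum>j\<in>UNIV. \<Sum>l\<in>UNIV. a l * b i * d j * F l i j)"
    by (simp add: sum_distrib_left mult_ac)
  also have "\<dots> = (\<Sum>i\<in>UNIV. \<Sum>l\<in>UNIV. \<Sum>j\<in>UNIV. a l * b i * d j * F l i j)"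
    by (rule sum.cong[OF refl], rule sum.swap)
  also have "\<dots> = (\<Sum>l\<in>UNIV. \<Sum>i\<in>UNIV. \<Sum>j\<in>UNIV. a l * b i * d j * F l i j)"
    by (rule sum.swap)
  finally show ?thesis .
qed

lemma triple_sum_contract: "(\<Sum>l\<in>UNIV. \<Sum>m\<in>UNIV. a l * (\<Sum>i\<in>UNIV. \<Sum>j\<in>UNIV. b i * d j * H i j m) * K l m) =
  (\<Sum>l\<in>UNIV. \<Sum>i\<in>UNIV. \<Sum>j\<in>UNIV. a l * b i * d j * (\<Sum>m\<in>UNIV. H i j m * K l m))" for a b d :: "'n::finite \<Rightarrow> real"
proof (rule sum.cong[OF refl])
  fix l
  have "(\<Sum>m\<in>UNIV. a l * (\<Sum>i\<in>UNIV. \<Sum>j\<in>UNIV. b i * d j * H i j m) * K l m) =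
      (\<Sum>m\<in>UNIV. \<Sum>i\<in>UNIV. \<Sum>j\<in>UNIV. a l * b i * d j * (H i j m * K l m))"
    by (simp add: sum_distrib_left sum_distrib_right mult_ac)
  also have "\<dots> = (\<Sum>i\<in>UNIV. \<Sum>m\<in>UNIV. \<Sum>j\<in>UNIV. a l * b i * d j * (H i j m * K l m))"
    by (rule sum.swap)
  also have "\<dots> = (\<Sum>i\<in>UNIV. \<Sum>j\<in>UNIV. \<Sum>m\<in>UNIV. a l * b i * d j * (H i j m * K l m))"
    by (rule sum.cong[OF refl], rule sum.swap)
  also have "\<dots> = (\<Sum>i\<in>UNIV. \<Sum>j\<in>UNIV. a l * b i * d j * (\<Sum>m\<in>UNIV. H i j m * K l m))"
    by (simp add: sum_distrib_left)
  finally show "(\<Sum>m\<in>UNIV. a l * (\<Sum>i\<in>UNIV. \<Sum>j\<in>UNIV. b i * d j * H i j m) * K l m) =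
      (\<Sum>i\<in>UNIV. \<Sum>j\<in>UNIV. a l * b i * d j * (\<Sum>m\<in>UNIV. H i j m * K l m))" .
qed

lemma triple_sum_reorder_swap: "(\<Sum>i\<in>UNIV. \<Sum>j\<in>UNIV. a i * d j * (\<Sum>l\<in>UNIV. b l * F l i j)) =
  (\<Sum>l\<in>UNIV. \<Sum>i\<in>UNIV. \<Sum>j\<in>UNIV. a l * b i * d j * F i l j)" for a b d :: "'n::finite \<Rightarrow> real"
  unfolding triple_sum_reorder by (subst sum.swap) (simp add: mult_ac)

lemma triple_sum_contract_swap: "(\<Sum>l\<in>UNIV. \<Sum>m\<in>UNIV. b l * (\<Sum>i\<in>UNIV. \<Sum>j\<in>UNIV. a i * d j * H i j m) * K l m) =
  (\<Sum>l\<in>UNIV. \<Sum>i\<in>UNIV. \<Sum>j\<in>UNIV. a l * b i * d j * (\<Sum>m\<in>UNIV. H l j m * K i m))" for a b d :: "'n::finite \<Rightarrow> real"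
  unfolding triple_sum_contract by (subst sum.swap) (simp add: mult_ac)

lemma triple_sum_combine:
  fixes P :: "'n::finite \<Rightarrow> 'n \<Rightarrow> 'n \<Rightarrow> real"
  shows "(\<Sum>l\<in>UNIV. \<Sum>i\<in>UNIV. \<Sum>j\<in>UNIV. P l i j * X1 l i j) - (\<Sum>l\<in>UNIV. \<Sum>i\<in>UNIV. \<Sum>j\<in>UNIV. P l i j * X2 l i j)
     + (\<Sum>l\<in>UNIV. \<Sum>i\<in>UNIV. \<Sum>j\<in>UNIV. P l i j * X3 l i j)
     - ((\<Sum>l\<in>UNIV. \<Sum>i\<in>UNIV. \<Sum>j\<in>UNIV. P l i j * Y1 l i j) - (\<Sum>l\<in>UNIV. \<Sum>i\<in>UNIV. \<Sum>j\<in>UNIV. P l i j * Y2 l i j)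
     + (\<Sum>l\<in>UNIV. \<Sum>i\<in>UNIV. \<Sum>j\<in>UNIV. P l i j * Y3 l i j))
   = (\<Sum>l\<in>UNIV. \<Sum>i\<in>UNIV. \<Sum>j\<in>UNIV. P l i j * (X1 l i j - X2 l i j + X3 l i j - (Y1 l i j - Y2 l i j + Y3 l i j)))"
  by (simp add: sum.distrib sum_subtractf algebra_simps)

lemma pd_eq_has_derivative:
  assumes "(f has_derivative f') (at x)"
  shows "pd l f x = f' (axis l 1)"
  unfolding pd_def using frechet_derivative_at[OF assms] by simp

lemma cov_c_eq: "cov_c Gam c i j h = (\<lambda>x. pd i (c j h) x - (\<Sum>m\<in>UNIV. Gam m i j x * c m h x) - (\<Sum>m\<in>UNIV. Gam m i h x * c j m x))"
  unfolding cov_c_def[abs_def] ..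

context
  fixes U :: "(real^'n::finite) set" and Gam :: "'n \<Rightarrow> 'n \<Rightarrow> 'n \<Rightarrow> real^'n \<Rightarrow> real"
    and c :: "'n \<Rightarrow> 'n \<Rightarrow> real^'n \<Rightarrow> real" and x :: "real^'n"
  assumes U: "open U" and G: "\<And>h i j. cinf_on U (Gam h i j)" and C: "\<And>i j. cinf_on U (c i j)"
    and x: "x \<in> U"
begin

abbreviation (input) "Gam_at \<equiv> (\<lambda>m i j. Gam m i j x)"

abbreviation (input) "dGam_at \<equiv> (\<lambda>l m i j. pd l (Gam m i j) x)"

abbreviation (input) "c_at \<equiv> (\<lambda>m h. c m h x)"

abbreviation (input) "dc_at \<equiv> (\<lambda>l j h. pd l (c j h) x)"

abbreviation (input) "ddc_at \<equiv> (\<lambda>l i j h. pd l (pd i (c j h)) x)"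

lemma Gam_has_derivative: "(Gam m i j has_derivative fd (Gam m i j) x) (at x)"
  by (rule cinf_on_has_derivative[OF U G x])

lemma c_has_derivative: "(c j h has_derivative fd (c j h) x) (at x)"
  by (rule cinf_on_has_derivative[OF U C x])

lemma pd_c_has_derivative: "(pd i (c j h) has_derivative fd (pd i (c j h)) x) (at x)"
  by (rule cinf_on_has_derivative[OF U cinf_on_pd[OF U C] x])

lemma jcov_eq: "jcov Gam_at c_at dc_at i j h = cov_c Gam c i j h x"
  unfolding jcov_def cov_c_def ..

lemma pd_cov_c_eq: "pd l (cov_c Gam c i j h) x = jdcov Gam_at dGam_at c_at dc_at ddc_at l i j h"
proof -
  have "(cov_c Gam c i j h has_derivative (\<lambda>w. fd (pd i (c j h)) x w
      - (\<Sum>m\<in>UNIV. Gam m i j x * fd (c m h) x w + fd (Gam m i j) x w * c m h x)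
      - (\<Sum>m\<in>UNIV. Gam m i h x * fd (c j m) x w + fd (Gam m i h) x w * c j m x))) (at x)"
    unfolding cov_c_eq
    by (intro has_derivative_diff has_derivative_sum has_derivative_mult Gam_has_derivative c_has_derivative pd_c_has_derivative)
  from pd_eq_has_derivative[OF this] show ?thesis
    unfolding jdcov_def pd_def by (simp add: add.commute)
qed

lemma cov2_c_eq: "cov2_c Gam c l i j h x = jcov2 Gam_at dGam_at c_at dc_at ddc_at l i j h"
  unfolding cov2_c_def jcov2_def pd_cov_c_eq jcov_eq ..

lemma pd_pd_c_commute: "ddc_at l i j h = ddc_at i l j h"
  unfolding pd_def[abs_def] using fd_fd_commute[OF U C x] by metis

lemma Gam_vec_has_derivative: "((\<lambda>y. \<chi> m. Gam m i j y) has_derivative fd (\<lambda>y. \<chi> m. Gam m i j y) x) (at x)"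
  by (rule cinf_on_has_derivative[OF U cinf_on_vec_lambda[OF U G] x])

lemma fd_Gam_vec_nth: "fd (\<lambda>y. \<chi> m. Gam m i j y) x w $ m = fd (Gam m i j) x w"
proof -
  have "((\<lambda>y. (\<chi> m. Gam m i j y) $ m) has_derivative (\<lambda>w. fd (\<lambda>y. \<chi> m. Gam m i j y) x w $ m)) (at x)"
    by (rule has_derivative_vec_nth[OF Gam_vec_has_derivative])
  then have "(Gam m i j has_derivative (\<lambda>w. fd (\<lambda>y. \<chi> m. Gam m i j y) x w $ m)) (at x)" by simp
  from fun_cong[OF frechet_derivative_at[OF this], of w] show ?thesis by simp
qed

lemma Rc_eq_jcurv: "Rc Gam l i j m x = jcurv Gam_at dGam_at l i j m"
  unfolding Rc_eq_base_curv base_curv_def chris_axis_axis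
  by (simp add: fd_Gam_vec_nth chris_axis jcurv_def pd_def mult.commute)

lemma cov_c_sym_eq: "cov_c_sym Gam c i j h x = jsym Gam_at c_at dc_at i j h"
  unfolding cov_c_sym_def jsym_def jcov_eq ..

lemma cov_c_has_derivative: "(cov_c Gam c i j h has_derivative fd (cov_c Gam c i j h) x) (at x)"
  by (rule cinf_on_has_derivative[OF U cinf_on_cov_c[OF U G C] x])

lemma pd_cov_c_sym_eq: "pd l (cov_c_sym Gam c i j h) x = jdsym Gam_at dGam_at c_at dc_at ddc_at l i j h"
proof -
  have "((\<lambda>y. cov_c Gam c i j h y + cov_c Gam c j i h y - cov_c Gam c h i j y) has_derivative
     (\<lambda>w. fd (cov_c Gam c i j h) x w + fd (cov_c Gam c j i h) x w - fd (cov_c Gam c h i j) x w)) (at x)"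
    by (intro has_derivative_diff has_derivative_add cov_c_has_derivative)
  from bounded_linear.has_derivative[OF bounded_linear_divide[of 2] this]
  have "(cov_c_sym Gam c i j h has_derivative
     (\<lambda>w. (fd (cov_c Gam c i j h) x w + fd (cov_c Gam c j i h) x w - fd (cov_c Gam c h i j) x w) / 2)) (at x)"
    unfolding cov_c_sym_def[abs_def] .
  from pd_eq_has_derivative[OF this] show ?thesis
    unfolding jdsym_def pd_cov_c_eq[symmetric] by (simp add: pd_def)
qed

lemma cov_c_sym_has_derivative: "(cov_c_sym Gam c i j h has_derivative fd (cov_c_sym Gam c i j h) x) (at x)"
  by (rule cinf_on_has_derivative[OF U _ x])
    (unfold cov_c_sym_def[abs_def], intro cinf_on_divide_const cinf_on_add cinf_on_diff cinf_on_cov_c U G C)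

lemma fd_cov_c_sym_form_nth: "fd (\<lambda>y. cov_c_sym_form Gam c y b d) x a $ h = (\<Sum>i\<in>UNIV. \<Sum>j\<in>UNIV. b $ i * d $ j * (\<Sum>l\<in>UNIV. a $ l * pd l (cov_c_sym Gam c i j h) x))"
proof -
  have hA: "((\<lambda>y. cov_c_sym_form Gam c y b d) has_derivative fd (\<lambda>y. cov_c_sym_form Gam c y b d) x) (at x)"
    by (rule cinf_on_has_derivative[OF U cinf_on_cov_c_sym_form[OF U G C] x])
  have "((\<lambda>y. cov_c_sym_form Gam c y b d $ h) has_derivative (\<lambda>w. fd (\<lambda>y. cov_c_sym_form Gam c y b d) x w $ h)) (at x)"
    by (rule has_derivative_vec_nth[OF hA])
  moreover have "((\<lambda>y. cov_c_sym_form Gam c y b d $ h) has_derivative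
      (\<lambda>w. \<Sum>i\<in>UNIV. \<Sum>j\<in>UNIV. b $ i * d $ j * fd (cov_c_sym Gam c i j h) x w)) (at x)"
    unfolding cov_c_sym_form_def by (simp, intro has_derivative_sum has_derivative_mult_right cov_c_sym_has_derivative)
  ultimately have "(\<lambda>w. fd (\<lambda>y. cov_c_sym_form Gam c y b d) x w $ h) = (\<lambda>w. \<Sum>i\<in>UNIV. \<Sum>j\<in>UNIV. b $ i * d $ j * fd (cov_c_sym Gam c i j h) x w)"
    by (rule has_derivative_unique)
  from fun_cong[OF this, of a]
  have "fd (\<lambda>y. cov_c_sym_form Gam c y b d) x a $ h = (\<Sum>i\<in>UNIV. \<Sum>j\<in>UNIV. b $ i * d $ j * fd (cov_c_sym Gam c i j h) x a)"
    by simp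
  also have "\<dots> = (\<Sum>i\<in>UNIV. \<Sum>j\<in>UNIV. b $ i * d $ j * (\<Sum>l\<in>UNIV. a $ l * pd l (cov_c_sym Gam c i j h) x))"
  proof -
    have "\<And>i j. fd (cov_c_sym Gam c i j h) x a = (\<Sum>l\<in>UNIV. a $ l * pd l (cov_c_sym Gam c i j h) x)"
      unfolding pd_def by (rule has_derivative_axis_expansion[OF cov_c_sym_has_derivative])
    then show ?thesis by simp
  qed
  finally show ?thesis .
qed

lemma mixed_curv_nth: "mixed_curv Gam c x a b d $ h = (\<Sum>l\<in>UNIV. \<Sum>i\<in>UNIV. \<Sum>j\<in>UNIV. a $ l * b $ i * d $ j * jmixed Gam_at dGam_at c_at dc_at ddc_at l i j h)"
proof -
  have t1: "fd (\<lambda>y. cov_c_sym_form Gam c y b d) x a $ h = (\<Sum>l\<in>UNIV. \<Sum>i\<in>UNIV. \<Sum>j\<in>UNIV. a $ l * b $ i * d $ j * jdsym Gam_at dGam_at c_at dc_at ddc_at l i j h)"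
    unfolding fd_cov_c_sym_form_nth triple_sum_reorder[of "\<lambda>i. b $ i" "\<lambda>j. d $ j" "\<lambda>l. a $ l"] pd_cov_c_sym_eq ..
  have t1': "fd (\<lambda>y. cov_c_sym_form Gam c y a d) x b $ h = (\<Sum>l\<in>UNIV. \<Sum>i\<in>UNIV. \<Sum>j\<in>UNIV. a $ l * b $ i * d $ j * jdsym Gam_at dGam_at c_at dc_at ddc_at i l j h)"
    unfolding fd_cov_c_sym_form_nth triple_sum_reorder_swap[of "\<lambda>i. a $ i" "\<lambda>j. d $ j" "\<lambda>l. b $ l"] pd_cov_c_sym_eq ..
  have t2: "chris_dual Gam x a (cov_c_sym_form Gam c x b d) $ h = (\<Sum>l\<in>UNIV. \<Sum>i\<in>UNIV. \<Sum>j\<in>UNIV. a $ l * b $ i * d $ j * (\<Sum>m\<in>UNIV. jsym Gam_at c_at dc_at i j m * Gam_at m l h))"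
    unfolding chris_dual_def cov_c_sym_form_def vec_lambda_beta triple_sum_contract[of "\<lambda>l. a $ l" "\<lambda>i. b $ i" "\<lambda>j. d $ j"] cov_c_sym_eq ..
  have t2': "chris_dual Gam x b (cov_c_sym_form Gam c x a d) $ h = (\<Sum>l\<in>UNIV. \<Sum>i\<in>UNIV. \<Sum>j\<in>UNIV. a $ l * b $ i * d $ j * (\<Sum>m\<in>UNIV. jsym Gam_at c_at dc_at l j m * Gam_at m i h))"
    unfolding chris_dual_def cov_c_sym_form_def vec_lambda_beta triple_sum_contract_swap[of "\<lambda>l. b $ l" "\<lambda>i. a $ i" "\<lambda>j. d $ j"] cov_c_sym_eq ..
  have t3: "cov_c_sym_form Gam c x a (chris Gam x b d) $ h = (\<Sum>l\<in>UNIV. \<Sum>i\<in>UNIV. \<Sum>j\<in>UNIV. a $ l * b $ i * d $ j * (\<Sum>m\<in>UNIV. Gam_at m i j * jsym Gam_at c_at dc_at l m h))"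
    unfolding chris_def cov_c_sym_form_def vec_lambda_beta triple_sum_contract[of "\<lambda>l. a $ l" "\<lambda>i. b $ i" "\<lambda>j. d $ j"] cov_c_sym_eq ..
  have t3': "cov_c_sym_form Gam c x b (chris Gam x a d) $ h = (\<Sum>l\<in>UNIV. \<Sum>i\<in>UNIV. \<Sum>j\<in>UNIV. a $ l * b $ i * d $ j * (\<Sum>m\<in>UNIV. Gam_at m l j * jsym Gam_at c_at dc_at i m h))"
    unfolding chris_def cov_c_sym_form_def vec_lambda_beta triple_sum_contract_swap[of "\<lambda>l. b $ l" "\<lambda>i. a $ i" "\<lambda>j. d $ j"] cov_c_sym_eq ..
  show ?thesis
    unfolding mixed_curv_def vector_minus_component vector_add_component t1 t1' t2 t2' t3 t3' triple_sum_combine jmixed_def ..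
qed

lemma mixed_curv_eq_zero:
  assumes tor: "\<And>h i j. Gam h i j x = Gam h j i x"
    and hyp: "\<And>i j k h. (cov2_c Gam c i k j h x - cov2_c Gam c i h j k x)
      - (cov2_c Gam c j k i h x - cov2_c Gam c j h i k x)
      - (\<Sum>m\<in>UNIV. Rc Gam i j k m x * c m h x)
      - (\<Sum>m\<in>UNIV. Rc Gam i j h m x * c k m x) = 0"
  shows "mixed_curv Gam c x a b d = 0"
proof -
  have "jmixed Gam_at dGam_at c_at dc_at ddc_at l i j h = 0" for l i j h
  proof -
    have hyp': "(cov2_c Gam c l j i h x - cov2_c Gam c l h i j x) - (cov2_c Gam c i j l h x - cov2_c Gam c i h l j x)
      - (\<Sum>m\<in>UNIV. Rc Gam l i j m x * c m h x) - (\<Sum>m\<in>UNIV. Rc Gam l i h m x * c j m x) = 0"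
      by (rule hyp)
    show ?thesis
      by (rule jmixed_eq_zero[OF tor pd_pd_c_commute]) (use hyp' in \<open>simp only: cov2_c_eq Rc_eq_jcurv\<close>)
  qed
  then show ?thesis by (simp add: vec_eq_iff mixed_curv_nth)
qed

end

section \<open>Semi-symmetry\<close>

definition dual_dot_tensor :: "('a \<Rightarrow> 'a \<Rightarrow> 'a \<Rightarrow> 'a::real_vector) \<Rightarrow> ('a \<Rightarrow> 'a \<Rightarrow> 'a \<Rightarrow> 'a)
    \<Rightarrow> 'a \<Rightarrow> 'a \<Rightarrow> 'a \<Rightarrow> 'a \<Rightarrow> 'a \<Rightarrow> 'a" where
  "dual_dot_tensor R S x y z w v = S x y (S z w v) - S (R x y z) w v - S z (R x y w) v - S z w (S x y v)"

lemma dual_dot_tensor_adjoint: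
  fixes R S :: "'a::real_inner \<Rightarrow> 'a \<Rightarrow> 'a \<Rightarrow> 'a"
  assumes adj: "\<And>a b v u. S a b v \<bullet> u = - (v \<bullet> R a b u)"
  shows "dual_dot_tensor R S x y z w v \<bullet> u = - (v \<bullet> curv_dot_tensor R x y z w u)"
  unfolding dual_dot_tensor_def curv_dot_tensor_def by (simp add: inner_diff_left inner_diff_right adj)

lemma dual_dot_tensor_eq_zero:
  fixes R S :: "'a::real_inner \<Rightarrow> 'a \<Rightarrow> 'a \<Rightarrow> 'a"
  assumes "\<And>a b v u. S a b v \<bullet> u = - (v \<bullet> R a b u)" and "\<And>u. curv_dot_tensor R x y z w u = 0"
  shows "dual_dot_tensor R S x y z w v = 0"
proof -
  let ?V = "dual_dot_tensor R S x y z w v"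
  have "?V \<bullet> ?V = 0" using dual_dot_tensor_adjoint[OF assms(1)] assms(2) by simp
  then show ?thesis by simp
qed

context
  fixes U :: "(real^'n::finite) set" and Gam :: "'n \<Rightarrow> 'n \<Rightarrow> 'n \<Rightarrow> real^'n \<Rightarrow> real"
    and c :: "'n \<Rightarrow> 'n \<Rightarrow> real^'n \<Rightarrow> real" and q :: "(real^'n) \<times> (real^'n)"
  assumes U: "open U" and G: "\<And>h i j. cinf_on U (Gam h i j)" and C: "\<And>i j. cinf_on U (c i j)"
    and q: "q \<in> U \<times> UNIV"
    and torsion_free: "\<And>h i j. Gam h i j (fst q) = Gam h j i (fst q)"
    and hyp: "\<And>i j k h. (cov2_c Gam c i k j h (fst q) - cov2_c Gam c i h j k (fst q))
      - (cov2_c Gam c j k i h (fst q) - cov2_c Gam c j h i k (fst q))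
      - (\<Sum>m\<in>UNIV. Rc Gam i j k m (fst q) * c m h (fst q))
      - (\<Sum>m\<in>UNIV. Rc Gam i j h m (fst q) * c k m (fst q)) = 0"
begin

lemma cform_curv_cot:
  "cform_curv (\<lambda>a b q. cot_cform Gam c q a b) q y1 y2 y3
     = adapted Gam q (base_curv Gam (fst q) (fst y1) (fst y2) (fst y3))
         (base_curv_dual Gam (fst q) (fst y1) (fst y2) (vert_coords Gam q y3))"
  for y1 y2 y3 :: "(real^'n) \<times> (real^'n)"
proof -
  have "fst q \<in> U" using q by auto
  then have "mixed_curv Gam c (fst q) (fst y1) (fst y2) (fst y3) = 0"
    by (rule mixed_curv_eq_zero[OF U G C _ torsion_free hyp])
  then show ?thesis
    using cform_curv_cot_adapted[where Gam = Gam and c = c, OF U G C q, where ?h1.0 = "fst y1" and ?v1.0 = "vert_coords Gam q y1"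
        and ?h2.0 = "fst y2" and ?v2.0 = "vert_coords Gam q y2" and ?h3.0 = "fst y3" and ?v3.0 = "vert_coords Gam q y3"]
    by (simp only: adapted_vert_coords add_0_right)
qed

lemma curv_dot_tensor_cot:
  "curv_dot_tensor (cform_curv (\<lambda>a b q. cot_cform Gam c q a b) q) y1 y2 y3 y4 y5
     = adapted Gam q (curv_dot_tensor (base_curv Gam (fst q)) (fst y1) (fst y2) (fst y3) (fst y4) (fst y5))
         (dual_dot_tensor (base_curv Gam (fst q)) (base_curv_dual Gam (fst q))
            (fst y1) (fst y2) (fst y3) (fst y4) (vert_coords Gam q y5))"
  for y1 y2 y3 y4 y5 :: "(real^'n) \<times> (real^'n)"
  unfolding curv_dot_tensor_def dual_dot_tensor_def cform_curv_cot fst_adapted vert_coords_adapted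
  by (simp add: adapted_diff)

lemma curv_dot_tensor_cot_eq_zero_iff:
  "(\<forall>y1 y2 y3 y4 y5. curv_dot_tensor (cform_curv (\<lambda>a b q. cot_cform Gam c q a b) q) y1 y2 y3 y4 y5 = 0)
     \<longleftrightarrow> (\<forall>a b d e f. curv_dot_tensor (base_curv Gam (fst q)) a b d e f = 0)"
proof -
  have x: "fst q \<in> U" using q by auto
  have adj: "\<And>a b v u. base_curv_dual Gam (fst q) a b v \<bullet> u = - (v \<bullet> base_curv Gam (fst q) a b u)"
    by (rule base_curv_dual_adjoint[OF U G x])
  show ?thesis
  proof (intro iffI allI)
    fix a b d e f :: "real^'n"
    assume "\<forall>y1 y2 y3 y4 y5. curv_dot_tensor (cform_curv (\<lambda>a b q. cot_cform Gam c q a b) q) y1 y2 y3 y4 y5 = 0"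
    then have "curv_dot_tensor (cform_curv (\<lambda>a b q. cot_cform Gam c q a b) q)
        (adapted Gam q a 0) (adapted Gam q b 0) (adapted Gam q d 0) (adapted Gam q e 0) (adapted Gam q f 0) = 0"
      by blast
    then show "curv_dot_tensor (base_curv Gam (fst q)) a b d e f = 0"
      unfolding curv_dot_tensor_cot adapted_eq_zero_iff fst_adapted by simp
  next
    fix y1 y2 y3 y4 y5 :: "(real^'n) \<times> (real^'n)"
    assume flat: "\<forall>a b d e f. curv_dot_tensor (base_curv Gam (fst q)) a b d e f = 0"
    then have "dual_dot_tensor (base_curv Gam (fst q)) (base_curv_dual Gam (fst q))
        (fst y1) (fst y2) (fst y3) (fst y4) (vert_coords Gam q y5) = 0"
      by (intro dual_dot_tensor_eq_zero[OF adj]) blast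
    then show "curv_dot_tensor (cform_curv (\<lambda>a b q. cot_cform Gam c q a b) q) y1 y2 y3 y4 y5 = 0"
      unfolding curv_dot_tensor_cot using flat by (simp add: adapted_zero)
  qed
qed

end

theorem theorem2:
  fixes U :: "(real^'n::finite) set"
    and Gam :: "'n \<Rightarrow> 'n \<Rightarrow> 'n \<Rightarrow> real^'n \<Rightarrow> real"
    and c :: "'n \<Rightarrow> 'n \<Rightarrow> real^'n \<Rightarrow> real"
  assumes "open U"
    and "\<And>h i j. cinf_on U (Gam h i j)"
    and "\<And>i j. cinf_on U (c i j)"
    and torsion_free: "\<And>h i j x. x \<in> U \<Longrightarrow> Gam h i j x = Gam h j i x"
    and c_sym: "\<And>i j x. x \<in> U \<Longrightarrow> c i j x = c j i x"
    and hyp: "\<And>i j k h x. x \<in> U \<Longrightarrow>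
        (cov2_c Gam c i k j h x - cov2_c Gam c i h j k x)
      - (cov2_c Gam c j k i h x - cov2_c Gam c j h i k x)
      - (\<Sum>m\<in>UNIV. Rc Gam i j k m x * c m h x)
      - (\<Sum>m\<in>UNIV. Rc Gam i j h m x * c k m x) = 0"
  shows "semi_symmetric (cot_conn Gam c) (U \<times> UNIV) \<longleftrightarrow> semi_symmetric (base_conn Gam) U"
proof -
  note U = assms(1) and G = assms(2) and C = assms(3)
  have T: "open (U \<times> (UNIV::(real^'n) set))" by (rule open_Times[OF U open_UNIV])
  define flat where "flat x \<longleftrightarrow> (\<forall>a b d e f. curv_dot_tensor (base_curv Gam x) a b d e f = 0)" for x
  have pointwise: "(\<forall>y1 y2 y3 y4 y5. curv_dot_tensor (cform_curv (\<lambda>a b q. cot_cform Gam c q a b) q) y1 y2 y3 y4 y5 = 0)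
      \<longleftrightarrow> flat (fst q)" if "q \<in> U \<times> UNIV" for q
    unfolding flat_def using that by (intro curv_dot_tensor_cot_eq_zero_iff[OF U G C _ torsion_free hyp]) auto
  have "semi_symmetric (cot_conn Gam c) (U \<times> UNIV) \<longleftrightarrow> (\<forall>q\<in>U \<times> UNIV. flat (fst q))"
    unfolding semi_symmetric_iff_cform_curv[OF T cinf_on_cot_cform[OF U G C] cot_conn_has_cform[OF U G]]
    using pointwise by simp
  moreover have "semi_symmetric (base_conn Gam) U \<longleftrightarrow> (\<forall>x\<in>U. flat x)"
    unfolding base_semi_symmetric_iff[OF U G] flat_def ..
  ultimately show ?thesis by (auto dest: bspec[where x = "(_, 0)"])
qed

end
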